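(* Let $(X_0,\delta)$ be an infinite countable metric space which is uniformly discrete, has bounded geometry and has Yu's Property A. Let $\mathsf H\in\mathbb B[\ell^2(X_0)]$ be a self-adjoint band dominated operator, with matrix $H:X_0\times X_0\to\mathbb C$, i.e. $[\mathsf H(u)](x)=\sum_{y\in X_0}H(x,y)u(y)$. For every $M_0\in\mathbf S_0$ let $\mathsf H_{M_0}\in\mathbb B[\ell^2(M_0)]$ be given by $[\mathsf H_{M_0}(v)](a)=\sum_{b\in M_0}H(a,b)v(b)$ for $a\in M_0$. Then $$\inf \mathrm{sp}_{\rm ess}(\mathsf H)=\sup_{M_0\in\mathbf S_0}\big[\inf\mathrm{sp}(\mathsf H_{M_0})\big],\qquad \sup \mathrm{sp}_{\rm ess}(\mathsf H)=\inf_{M_0\in\mathbf S_0}\big[\sup\mathrm{sp}(\mathsf H_{M_0})\big].$$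
   Context: Uniform discreteness: there is $\alpha>0$ with $\delta(x,x')\ge\alpha$ whenever $x\ne x'$. Bounded geometry: for every $r>0$ there is $N_r<\infty$ such that every closed ball of radius $r$ has fewer than $N_r$ elements. For $r\ge0$ let $\Delta_r=\{(x,x')\in X_0\times X_0:\delta(x,x')\le r\}$. Property A: there is a sequence of positive definite kernels $K_n:X_0\times X_0\to\mathbb R$, each vanishing outside some $\Delta_{r_n}$ (band kernels), converging to the constant $1$ uniformly on each $\Delta_r$. An operator $\mathsf H\in\mathbb B[\ell^2(X_0)]$ with matrix $H$ is a band operator if $\sup_{x,y}|H(x,y)|<\infty$ and there is $r>0$ with $H(x,y)=0$ when $\delta(x,y)>r$; it is band dominated if it is a norm limit of band operators. $\mathbf S_0$ denotes the family of subsets $M_0\subset X_0$ with finite complement in $X_0$. $\mathrm{sp}$ denotes spectrum and $\mathrm{sp}_{\rm ess}$ essential spectrum. *)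

theory Defs
  imports "HOL-Analysis.Analysis"
begin

(* l^2(A), realised as square-summable functions 'a => complex vanishing outside A *)
definition ell2_on :: "'a set \<Rightarrow> ('a \<Rightarrow> complex) set" where
  "ell2_on A = {u. (\<forall>x. x \<notin> A \<longrightarrow> u x = 0) \<and> (\<lambda>x. (cmod (u x))^2) summable_on UNIV}"

definition ell2_norm :: "('a \<Rightarrow> complex) \<Rightarrow> real" where
  "ell2_norm u = sqrt (infsum (\<lambda>x. (cmod (u x))^2) UNIV)"

definition ell2_inner :: "('a \<Rightarrow> complex) \<Rightarrow> ('a \<Rightarrow> complex) \<Rightarrow> complex" where
  "ell2_inner u v = infsum (\<lambda>x. u x * cnj (v x)) UNIV"

definition bounded_on :: "'a set \<Rightarrow> (('a \<Rightarrow> complex) \<Rightarrow> ('a \<Rightarrow> complex)) \<Rightarrow> bool" where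
  "bounded_on A T \<longleftrightarrow> (\<forall>u\<in>ell2_on A. T u \<in> ell2_on A) \<and>
     (\<exists>C. \<forall>u\<in>ell2_on A. ell2_norm (T u) \<le> C * ell2_norm u)"

definition mat_op :: "('a \<Rightarrow> 'a \<Rightarrow> complex) \<Rightarrow> 'a set \<Rightarrow> ('a \<Rightarrow> complex) \<Rightarrow> 'a \<Rightarrow> complex" where
  "mat_op H A u = (\<lambda>x. if x \<in> A then infsum (\<lambda>y. H x y * u y) A else 0)"

definition bounded_matrix_on :: "'a set \<Rightarrow> ('a \<Rightarrow> 'a \<Rightarrow> complex) \<Rightarrow> bool" where
  "bounded_matrix_on A H \<longleftrightarrow>
     (\<forall>u\<in>ell2_on A. \<forall>x\<in>A. (\<lambda>y. H x y * u y) summable_on A) \<and> bounded_on A (mat_op H A)"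

definition self_adjoint_on :: "'a set \<Rightarrow> (('a \<Rightarrow> complex) \<Rightarrow> ('a \<Rightarrow> complex)) \<Rightarrow> bool" where
  "self_adjoint_on A T \<longleftrightarrow>
     (\<forall>u\<in>ell2_on A. \<forall>v\<in>ell2_on A. ell2_inner (T u) v = ell2_inner u (T v))"

definition band_matrix :: "('a \<Rightarrow> 'a \<Rightarrow> real) \<Rightarrow> ('a \<Rightarrow> 'a \<Rightarrow> complex) \<Rightarrow> bool" where
  "band_matrix \<delta> B \<longleftrightarrow> (\<exists>C. \<forall>x y. cmod (B x y) \<le> C) \<and>
     (\<exists>r>0. \<forall>x y. \<delta> x y > r \<longrightarrow> B x y = 0)"

definition band_dominated :: "('a \<Rightarrow> 'a \<Rightarrow> real) \<Rightarrow> ('a \<Rightarrow> 'a \<Rightarrow> complex) \<Rightarrow> bool" where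
  "band_dominated \<delta> H \<longleftrightarrow> (\<forall>\<epsilon>>0. \<exists>B. band_matrix \<delta> B \<and>
     (\<forall>u\<in>ell2_on UNIV. ell2_norm (\<lambda>x. mat_op H UNIV u x - mat_op B UNIV u x) \<le> \<epsilon> * ell2_norm u))"

definition shift_op :: "(('a \<Rightarrow> complex) \<Rightarrow> ('a \<Rightarrow> complex)) \<Rightarrow> complex \<Rightarrow> ('a \<Rightarrow> complex) \<Rightarrow> ('a \<Rightarrow> complex)" where
  "shift_op T z = (\<lambda>u x. T u x - z * u x)"

definition invertible_on :: "'a set \<Rightarrow> (('a \<Rightarrow> complex) \<Rightarrow> ('a \<Rightarrow> complex)) \<Rightarrow> bool" where
  "invertible_on A T \<longleftrightarrow> (\<exists>S. bounded_on A S \<and> (\<forall>u\<in>ell2_on A. S (T u) = u \<and> T (S u) = u))"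

definition spectrum_on :: "'a set \<Rightarrow> (('a \<Rightarrow> complex) \<Rightarrow> ('a \<Rightarrow> complex)) \<Rightarrow> complex set" where
  "spectrum_on A T = {z. \<not> invertible_on A (shift_op T z)}"

definition lincomb :: "('a \<Rightarrow> complex) set \<Rightarrow> (('a \<Rightarrow> complex) \<Rightarrow> complex) \<Rightarrow> 'a \<Rightarrow> complex" where
  "lincomb F c = (\<lambda>x. \<Sum>f\<in>F. c f * f x)"

definition fredholm_on :: "'a set \<Rightarrow> (('a \<Rightarrow> complex) \<Rightarrow> ('a \<Rightarrow> complex)) \<Rightarrow> bool" where
  "fredholm_on A T \<longleftrightarrow>
    (\<exists>F. finite F \<and> F \<subseteq> ell2_on A \<and>
        (\<forall>u\<in>ell2_on A. T u = (\<lambda>_. 0) \<longrightarrow> (\<exists>c. u = lincomb F c))) \<and>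
    (\<exists>F. finite F \<and> F \<subseteq> ell2_on A \<and>
        (\<forall>v\<in>ell2_on A. \<exists>u\<in>ell2_on A. \<exists>c. v = (\<lambda>x. T u x + lincomb F c x)))"

definition ess_spectrum_on :: "'a set \<Rightarrow> (('a \<Rightarrow> complex) \<Rightarrow> ('a \<Rightarrow> complex)) \<Rightarrow> complex set" where
  "ess_spectrum_on A T = {z. \<not> fredholm_on A (shift_op T z)}"

definition real_points :: "complex set \<Rightarrow> real set" where
  "real_points S = {t. complex_of_real t \<in> S}"

definition uniformly_discrete :: "('a \<Rightarrow> 'a \<Rightarrow> real) \<Rightarrow> bool" where
  "uniformly_discrete \<delta> \<longleftrightarrow> (\<exists>\<alpha>>0. \<forall>x x'. x \<noteq> x' \<longrightarrow> \<delta> x x' \<ge> \<alpha>)"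

definition bounded_geometry :: "('a \<Rightarrow> 'a \<Rightarrow> real) \<Rightarrow> bool" where
  "bounded_geometry \<delta> \<longleftrightarrow> (\<forall>r>0. \<exists>N::nat. \<forall>x.
      finite {y. \<delta> x y \<le> r} \<and> card {y. \<delta> x y \<le> r} < N)"

definition pos_def_kernel :: "('a \<Rightarrow> 'a \<Rightarrow> real) \<Rightarrow> bool" where
  "pos_def_kernel K \<longleftrightarrow> (\<forall>x y. K x y = K y x) \<and>
     (\<forall>F c. finite F \<longrightarrow> (\<Sum>x\<in>F. \<Sum>y\<in>F. c x * c y * K x y) \<ge> (0::real))"

definition property_A :: "('a \<Rightarrow> 'a \<Rightarrow> real) \<Rightarrow> bool" where
  "property_A \<delta> \<longleftrightarrow> (\<exists>K :: nat \<Rightarrow> 'a \<Rightarrow> 'a \<Rightarrow> real.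
     (\<forall>n. pos_def_kernel (K n)) \<and>
     (\<forall>n. \<exists>r. \<forall>x y. \<delta> x y > r \<longrightarrow> K n x y = 0) \<and>
     (\<forall>r. \<forall>\<epsilon>>0. \<exists>N. \<forall>n\<ge>N. \<forall>x y. \<delta> x y \<le> r \<longrightarrow> \<bar>K n x y - 1\<bar> < \<epsilon>))"

end

theory Submission
  imports Defs
begin

text \<open>For a bounded self-adjoint \<open>H\<close> and any index set \<open>M\<close>, the bottom of the spectrum of the
  compression \<open>H\<^sub>M\<close> is the infimum of its quadratic form on unit vectors of \<open>\<ell>\<^sup>2(M)\<close>: below it
  \<open>H\<^sub>M - t\<close> is coercive, hence invertible (Lax--Milgram), and at it approximate kernel vectors exist.
  Let \<open>\<mu>\<close> be the supremum of these bottoms over cofinite \<open>M\<close>.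

  For \<open>t < \<mu>\<close> some cofinite compression of \<open>H - t\<close> is invertible, and since \<open>M\<close> has finite
  complement this makes \<open>H - t\<close> Fredholm. Conversely, pushing \<open>M\<close> further and further out
  produces finitely supported unit vectors \<open>u\<^sub>k\<close> with pairwise disjoint supports, residuals
  \<open>\<parallel>(H - \<mu>) u\<^sub>k\<parallel> \<le> 4\<^sup>-\<^sup>k\<close>, and inner products at most \<open>4\<^sup>-\<^sup>k\<close> with any prescribed finite set.
  If \<open>H - \<mu>\<close> were Fredholm, with the range completed by the span of a finite set \<open>G\<close>, then
  \<open>v = \<Sum> 2\<^sup>-\<^sup>k u\<^sub>k\<close> would satisfy \<open>\<langle>v, u\<^sub>k\<rangle> \<ge> 2\<^sup>-\<^sup>k/4\<close>, whereas every \<open>(H - \<mu>) w + g\<close> with \<open>g\<close>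
  in the span of \<open>G\<close> has inner product \<open>O(4\<^sup>-\<^sup>k)\<close> with \<open>u\<^sub>k\<close>. So \<open>\<mu>\<close> is the bottom of the
  essential spectrum; the top follows by applying this to \<open>-H\<close>.\<close>

section \<open>Square-summable functions\<close>

definition square_summable :: "('a \<Rightarrow> complex) \<Rightarrow> bool" where
  "square_summable u \<longleftrightarrow> (\<lambda>x. (cmod (u x))^2) summable_on UNIV"

lemma ell2_on_iff: "u \<in> ell2_on A \<longleftrightarrow> (\<forall>x. x \<notin> A \<longrightarrow> u x = 0) \<and> square_summable u"
  by (simp add: ell2_on_def square_summable_def)

lemma ell2_norm_nonneg: "ell2_norm u \<ge> 0"
  unfolding ell2_norm_def by (simp add: infsum_nonneg)

lemma ell2_norm_power2: "(ell2_norm u)^2 = infsum (\<lambda>x. (cmod (u x))^2) UNIV"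
  unfolding ell2_norm_def by (simp add: infsum_nonneg)

lemma L2_set_le_ell2_norm:
  assumes "square_summable u" "finite F"
  shows "L2_set (\<lambda>x. cmod (u x)) F \<le> ell2_norm u"
proof -
  have "(\<Sum>x\<in>F. (cmod (u x))^2) \<le> infsum (\<lambda>x. (cmod (u x))^2) UNIV"
    using assms by (intro finite_sum_le_infsum) (auto simp: square_summable_def)
  then show ?thesis unfolding L2_set_def ell2_norm_def by (simp add: real_sqrt_le_mono)
qed

lemma L2_set_bounded_ell2:
  assumes "\<And>F. finite F \<Longrightarrow> L2_set (\<lambda>x. cmod (u x)) F \<le> B"
  shows "square_summable u" "ell2_norm u \<le> B"
proof -
  have B0: "B \<ge> 0" using assms[of "{}"] by simp
  have fs: "(\<Sum>x\<in>F. (cmod (u x))^2) \<le> B^2" if "finite F" for F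
  proof -
    have "sqrt (\<Sum>x\<in>F. (cmod (u x))^2) \<le> B" using assms[OF that] by (simp add: L2_set_def)
    then have "(sqrt (\<Sum>x\<in>F. (cmod (u x))^2))^2 \<le> B^2"
      by (intro power_mono) (auto simp: sum_nonneg)
    then show ?thesis by (simp add: sum_nonneg)
  qed
  show S: "square_summable u" unfolding square_summable_def
    by (rule nonneg_bdd_above_summable_on) (auto intro!: bdd_aboveI2 fs)
  have "infsum (\<lambda>x. (cmod (u x))^2) UNIV \<le> B^2"
    using S by (intro infsum_le_finite_sums) (auto simp: square_summable_def fs)
  then show "ell2_norm u \<le> B" unfolding ell2_norm_def
    using B0 real_sqrt_le_mono[of _ "B^2"] by fastforce
qed

lemma ell2_add:
  assumes "square_summable u" "square_summable v"
  shows "square_summable (\<lambda>x. u x + v x)" "ell2_norm (\<lambda>x. u x + v x) \<le> ell2_norm u + ell2_norm v"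
proof -
  have *: "L2_set (\<lambda>x. cmod (u x + v x)) F \<le> ell2_norm u + ell2_norm v" if "finite F" for F
  proof -
    have "L2_set (\<lambda>x. cmod (u x + v x)) F \<le> L2_set (\<lambda>x. cmod (u x) + cmod (v x)) F"
      by (rule L2_set_mono) (auto simp: norm_triangle_ineq)
    also have "\<dots> \<le> L2_set (\<lambda>x. cmod (u x)) F + L2_set (\<lambda>x. cmod (v x)) F"
      by (rule L2_set_triangle_ineq)
    also have "\<dots> \<le> ell2_norm u + ell2_norm v"
      using L2_set_le_ell2_norm[OF assms(1) that] L2_set_le_ell2_norm[OF assms(2) that]
        by (rule add_mono)
    finally show ?thesis .
  qed
  show "square_summable (\<lambda>x. u x + v x)" by (rule L2_set_bounded_ell2(1)[OF *])
  show "ell2_norm (\<lambda>x. u x + v x) \<le> ell2_norm u + ell2_norm v"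
    by (rule L2_set_bounded_ell2(2)[OF *])
qed

lemma ell2_scale_le:
  assumes "square_summable u"
  shows "square_summable (\<lambda>x. c * u x)" "ell2_norm (\<lambda>x. c * u x) \<le> cmod c * ell2_norm u"
proof -
  have *: "L2_set (\<lambda>x. cmod (c * u x)) F \<le> cmod c * ell2_norm u" if "finite F" for F
  proof -
    have "L2_set (\<lambda>x. cmod (c * u x)) F = cmod c * L2_set (\<lambda>x. cmod (u x)) F"
      by (simp add: L2_set_right_distrib norm_mult)
    also have "\<dots> \<le> cmod c * ell2_norm u"
      using L2_set_le_ell2_norm[OF assms that] by (simp add: mult_left_mono)
    finally show ?thesis .
  qed
  show "square_summable (\<lambda>x. c * u x)" by (rule L2_set_bounded_ell2(1)[OF *])
  show "ell2_norm (\<lambda>x. c * u x) \<le> cmod c * ell2_norm u" by (rule L2_set_bounded_ell2(2)[OF *])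
qed

lemma ell2_scale:
  assumes "square_summable u"
  shows "square_summable (\<lambda>x. c * u x)" "ell2_norm (\<lambda>x. c * u x) = cmod c * ell2_norm u"
proof -
  show "square_summable (\<lambda>x. c * u x)" using ell2_scale_le assms by blast
  show "ell2_norm (\<lambda>x. c * u x) = cmod c * ell2_norm u"
  proof (cases "c = 0")
    case True then show ?thesis by (simp add: ell2_norm_def)
  next
    case False
    have "(\<lambda>x. inverse c * (c * u x)) = u" using False by (auto simp: field_simps)
    then have "ell2_norm u = ell2_norm (\<lambda>x. inverse c * (c * u x))" by simp
    also have "\<dots> \<le> cmod (inverse c) * ell2_norm (\<lambda>x. c * u x)"
      by (rule ell2_scale_le(2)) (rule ell2_scale_le(1)[OF assms])
    finally have "cmod c * ell2_norm u \<le> cmod c * (cmod (inverse c) * ell2_norm (\<lambda>x. c * u x))"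
      by (rule mult_left_mono) simp
    also have "\<dots> = ell2_norm (\<lambda>x. c * u x)" using False by (simp add: norm_inverse)
    finally have "cmod c * ell2_norm u \<le> ell2_norm (\<lambda>x. c * u x)" .
    then show ?thesis using ell2_scale_le(2)[OF assms, of c] by linarith
  qed
qed

lemma ell2_uminus:
  "square_summable u \<Longrightarrow> square_summable (\<lambda>x. - u x)" "ell2_norm (\<lambda>x. - u x) = ell2_norm u"
  using ell2_scale[of u "-1"] by (simp_all add: ell2_norm_def)

lemma ell2_diff:
  assumes "square_summable u" "square_summable v"
  shows "square_summable (\<lambda>x. u x - v x)" "ell2_norm (\<lambda>x. u x - v x) \<le> ell2_norm u + ell2_norm v"
  using ell2_add[OF assms(1) ell2_uminus(1)[OF assms(2)]] ell2_uminus(2)[of v] by simp_all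

lemma norm_le_ell2_norm: "square_summable u \<Longrightarrow> cmod (u x) \<le> ell2_norm u"
  using L2_set_le_ell2_norm[of u "{x}"] by (simp add: L2_set_def)

lemma square_summable_zero[simp]: "square_summable (\<lambda>x. 0)"
  by (simp add: square_summable_def)

lemma ell2_norm_zero[simp]: "ell2_norm (\<lambda>x. 0) = 0"
  by (simp add: ell2_norm_def)

lemma ell2_norm_eq_0D: "square_summable u \<Longrightarrow> ell2_norm u = 0 \<Longrightarrow> u = (\<lambda>x. 0)"
  using norm_le_ell2_norm[of u] by fastforce

lemma square_summable_finite_support: "finite {x. u x \<noteq> 0} \<Longrightarrow> square_summable u"
  unfolding square_summable_def by (rule finite_nonzero_values_imp_summable_on) simp

lemma ell2_inner_abs_summable:
  assumes "square_summable u" "square_summable v"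
  shows "(\<lambda>x. norm (u x * cnj (v x))) summable_on UNIV"
    "infsum (\<lambda>x. norm (u x * cnj (v x))) UNIV \<le> ell2_norm u * ell2_norm v"
proof -
  have *: "(\<Sum>x\<in>F. norm (u x * cnj (v x))) \<le> ell2_norm u * ell2_norm v" if "finite F" for F
  proof -
    have "(\<Sum>x\<in>F. norm (u x * cnj (v x))) = (\<Sum>x\<in>F. \<bar>cmod (u x)\<bar> * \<bar>cmod (v x)\<bar>)"
      by (simp add: norm_mult)
    also have "\<dots> \<le> L2_set (\<lambda>x. cmod (u x)) F * L2_set (\<lambda>x. cmod (v x)) F"
      by (rule L2_set_mult_ineq)
    also have "\<dots> \<le> ell2_norm u * ell2_norm v"
      using L2_set_le_ell2_norm assms that by (intro mult_mono) (auto simp: ell2_norm_nonneg)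
    finally show ?thesis .
  qed
  show S: "(\<lambda>x. norm (u x * cnj (v x))) summable_on UNIV"
    by (rule nonneg_bdd_above_summable_on) (auto intro!: bdd_aboveI2 *)
  show "infsum (\<lambda>x. norm (u x * cnj (v x))) UNIV \<le> ell2_norm u * ell2_norm v"
    using S by (intro infsum_le_finite_sums) (auto simp: *)
qed

lemma ell2_inner_summable:
  "square_summable u \<Longrightarrow> square_summable v \<Longrightarrow> (\<lambda>x. u x * cnj (v x)) summable_on UNIV"
  using ell2_inner_abs_summable(1) summable_on_iff_abs_summable_on_complex by blast

lemma ell2_inner_Cauchy_Schwarz:
  assumes "square_summable u" "square_summable v"
  shows "cmod (ell2_inner u v) \<le> ell2_norm u * ell2_norm v"
proof -
  have "cmod (ell2_inner u v) \<le> infsum (\<lambda>x. norm (u x * cnj (v x))) UNIV"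
    unfolding ell2_inner_def by (rule norm_infsum_bound) (rule ell2_inner_abs_summable(1)[OF assms])
  also have "\<dots> \<le> ell2_norm u * ell2_norm v" by (rule ell2_inner_abs_summable(2)[OF assms])
  finally show ?thesis .
qed

lemma ell2_inner_add_left:
  assumes "square_summable u" "square_summable v" "square_summable w"
  shows "ell2_inner (\<lambda>x. u x + v x) w = ell2_inner u w + ell2_inner v w"
  unfolding ell2_inner_def distrib_right
  by (rule infsum_add) (use ell2_inner_summable assms in auto)

lemma ell2_inner_scale_left:
  assumes "square_summable u" "square_summable w"
  shows "ell2_inner (\<lambda>x. c * u x) w = c * ell2_inner u w"
  unfolding ell2_inner_def mult.assoc
  by (rule infsum_cmult_right) (use ell2_inner_summable assms in auto)

lemma ell2_inner_commute: "ell2_inner v u = cnj (ell2_inner u v)"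
  unfolding ell2_inner_def infsum_cnj[symmetric] by (simp add: mult.commute)

lemma ell2_inner_self:
  assumes "square_summable u"
  shows "ell2_inner u u = complex_of_real ((ell2_norm u)^2)"
proof -
  have e: "(\<lambda>x. u x * cnj (u x)) = (\<lambda>x. complex_of_real ((cmod (u x))^2))"
    by (rule ext) (rule complex_norm_square[symmetric])
  have "((\<lambda>x. (cmod (u x))^2) has_sum infsum (\<lambda>x. (cmod (u x))^2) UNIV) UNIV"
    using assms by (simp add: square_summable_def)
  then have "((\<lambda>x. complex_of_real ((cmod (u x))^2)) has_sum
      complex_of_real (infsum (\<lambda>x. (cmod (u x))^2) UNIV)) UNIV"
    by (rule has_sum_of_real)
  then show ?thesis unfolding ell2_inner_def e ell2_norm_power2 by (rule infsumI)
qed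

lemma ell2_inner_self_Re: "square_summable u \<Longrightarrow> Re (ell2_inner u u) = (ell2_norm u)^2"
  by (simp add: ell2_inner_self)

lemma ell2_inner_uminus_left:
  assumes "square_summable u" "square_summable w"
  shows "ell2_inner (\<lambda>x. - u x) w = - ell2_inner u w"
  using ell2_inner_scale_left[OF assms, of "-1"] by simp

lemma ell2_inner_diff_left:
  assumes "square_summable u" "square_summable v" "square_summable w"
  shows "ell2_inner (\<lambda>x. u x - v x) w = ell2_inner u w - ell2_inner v w"
  using ell2_inner_add_left[OF assms(1) ell2_uminus(1)[OF assms(2)] assms(3)] ell2_inner_uminus_left[OF assms(2,3)]
  by simp

lemma ell2_inner_scale_right:
  assumes "square_summable u" "square_summable w"
  shows "ell2_inner w (\<lambda>x. c * u x) = cnj c * ell2_inner w u"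
  by (subst (1 2) ell2_inner_commute) (simp add: ell2_inner_scale_left assms)

lemma ell2_inner_diff_right:
  assumes "square_summable u" "square_summable v" "square_summable w"
  shows "ell2_inner w (\<lambda>x. u x - v x) = ell2_inner w u - ell2_inner w v"
  by (subst (1 2 3) ell2_inner_commute) (simp add: ell2_inner_diff_left assms)

lemma ell2_norm_diff_power2:
  assumes "square_summable u" "square_summable v"
  shows "(ell2_norm (\<lambda>x. u x - v x))^2 = (ell2_norm u)^2 - 2 * Re (ell2_inner v u) + (ell2_norm v)^2"
proof -
  have d: "square_summable (\<lambda>x. u x - v x)" using ell2_diff assms by blast
  have "complex_of_real ((ell2_norm (\<lambda>x. u x - v x))^2) = ell2_inner (\<lambda>x. u x - v x) (\<lambda>x. u x - v x)"
    using ell2_inner_self[OF d] by simp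
  also have "\<dots> = ell2_inner u u - ell2_inner u v - (ell2_inner v u - ell2_inner v v)"
    using assms d by (simp add: ell2_inner_diff_left ell2_inner_diff_right)
  finally have "complex_of_real ((ell2_norm (\<lambda>x. u x - v x))^2)
      = ell2_inner u u - ell2_inner u v - (ell2_inner v u - ell2_inner v v)" .
  then have "(ell2_norm (\<lambda>x. u x - v x))^2
      = Re (ell2_inner u u - ell2_inner u v - (ell2_inner v u - ell2_inner v v))"
    by (metis Re_complex_of_real)
  also have "\<dots> = (ell2_norm u)^2 - 2 * Re (ell2_inner v u) + (ell2_norm v)^2"
    using assms by (simp add: ell2_inner_self_Re ell2_inner_commute[of u v])
  finally show ?thesis .
qed

lemma ell2_norm_diff_triangle:
  assumes "square_summable a" "square_summable b" "square_summable c"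
  shows "ell2_norm (\<lambda>x. a x - c x) \<le> ell2_norm (\<lambda>x. a x - b x) + ell2_norm (\<lambda>x. b x - c x)"
  using ell2_add(2)[OF ell2_diff(1)[OF assms(1,2)] ell2_diff(1)[OF assms(2,3)]] by simp

lemma ell2_norm_diff_commute: "ell2_norm (\<lambda>x. a x - b x) = ell2_norm (\<lambda>x. b x - a x)"
  unfolding ell2_norm_def by (simp add: norm_minus_commute)

lemma ell2_eqI_norm_diff:
  assumes "square_summable u" "square_summable v" "ell2_norm (\<lambda>x. u x - v x) \<le> 0"
  shows "u = v"
proof -
  have "ell2_norm (\<lambda>x. u x - v x) = 0" using assms(3) ell2_norm_nonneg[of "\<lambda>x. u x - v x"]
    by linarith
  then have "(\<lambda>x. u x - v x) = (\<lambda>x. 0)" using ell2_norm_eq_0D ell2_diff(1)[OF assms(1,2)] by blast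
  then show ?thesis by (metis eq_iff_diff_eq_0 ext)
qed

lemma ell2_on_complete:
  assumes s: "\<And>n. s n \<in> ell2_on A" and b: "b \<longlonglongrightarrow> 0"
    and C: "\<And>n m. n \<le> m \<Longrightarrow> ell2_norm (\<lambda>x. s m x - s n x) \<le> b n"
  shows "\<exists>v \<in> ell2_on A. \<forall>n. ell2_norm (\<lambda>x. v x - s n x) \<le> b n"
proof -
  have l2s: "square_summable (s n)" for n using s by (simp add: ell2_on_iff)
  have pt: "cmod (s m x - s n x) \<le> b n" if "n \<le> m" for m n x
    using norm_le_ell2_norm[OF ell2_diff(1)[OF l2s[of m] l2s[of n]], of x] C[OF that] by simp
  have cau: "Cauchy (\<lambda>n. s n x)" for x
  proof (rule metric_CauchyI)
    fix e :: real assume "e > 0"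
    then obtain N where N: "\<And>n. n \<ge> N \<Longrightarrow> \<bar>b n\<bar> < e"
      using b unfolding LIMSEQ_def by (metis dist_real_def diff_zero)
    show "\<exists>M. \<forall>m\<ge>M. \<forall>n\<ge>M. dist (s m x) (s n x) < e"
    proof (intro exI allI impI)
      fix m n assume "m \<ge> N" "n \<ge> N"
      show "dist (s m x) (s n x) < e"
      proof (cases "n \<le> m")
        case True then show ?thesis using pt[OF True, of x] N[OF \<open>n \<ge> N\<close>] by (simp add: dist_norm)
      next
        case False then have "m \<le> n" by simp
        then show ?thesis using pt[of m n x] N[OF \<open>m \<ge> N\<close>]
          by (simp add: dist_norm norm_minus_commute)
      qed
    qed
  qed
  define v where "v x = lim (\<lambda>n. s n x)" for x
  have lim: "(\<lambda>n. s n x) \<longlonglongrightarrow> v x" for x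
    using cau[of x] Cauchy_convergent_iff convergent_LIMSEQ_iff v_def by metis
  have bound: "ell2_norm (\<lambda>x. v x - s n x) \<le> b n \<and> square_summable (\<lambda>x. v x - s n x)" for n
  proof -
    have *: "L2_set (\<lambda>x. cmod (v x - s n x)) F \<le> b n" if "finite F" for F
    proof -
      have t: "(\<lambda>m. L2_set (\<lambda>x. cmod (s m x - s n x)) F) \<longlonglongrightarrow> L2_set (\<lambda>x. cmod (v x - s n x)) F"
        unfolding L2_set_def by (intro tendsto_intros lim)
      show ?thesis
      proof (rule tendsto_upperbound[OF t])
        show "\<forall>\<^sub>F m in sequentially. L2_set (\<lambda>x. cmod (s m x - s n x)) F \<le> b n"
          unfolding eventually_sequentially
        proof (intro exI allI impI)
          fix m assume "m \<ge> n"
          then show "L2_set (\<lambda>x. cmod (s m x - s n x)) F \<le> b n"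
            using L2_set_le_ell2_norm[OF ell2_diff(1)[OF l2s l2s] that, of m n] C[of n m]
              by linarith
        qed
      qed simp
    qed
    show ?thesis using L2_set_bounded_ell2[OF *] by blast
  qed
  have l2v: "square_summable v"
  proof -
    have "square_summable (\<lambda>x. (v x - s 0 x) + s 0 x)" using ell2_add(1) bound l2s by blast
    then show ?thesis by simp
  qed
  have vz: "v x = 0" if "x \<notin> A" for x
  proof -
    have "(\<lambda>n. s n x) = (\<lambda>n. 0)" using s that by (simp add: ell2_on_iff)
    then show ?thesis using lim[of x] LIMSEQ_unique by (metis tendsto_const)
  qed
  show ?thesis using l2v vz bound by (intro bexI[of _ v]) (auto simp: ell2_on_iff)
qed

lemma ell2_on_square_summable: "u \<in> ell2_on A \<Longrightarrow> square_summable u" by (simp add: ell2_on_iff)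

lemma ell2_on_outside: "u \<in> ell2_on A \<Longrightarrow> x \<notin> A \<Longrightarrow> u x = 0" by (simp add: ell2_on_iff)

lemma ell2_on_add: "u \<in> ell2_on A \<Longrightarrow> v \<in> ell2_on A \<Longrightarrow> (\<lambda>x. u x + v x) \<in> ell2_on A"
  by (simp add: ell2_on_iff ell2_add)

lemma ell2_on_diff: "u \<in> ell2_on A \<Longrightarrow> v \<in> ell2_on A \<Longrightarrow> (\<lambda>x. u x - v x) \<in> ell2_on A"
  by (simp add: ell2_on_iff ell2_diff)

lemma ell2_on_scale: "u \<in> ell2_on A \<Longrightarrow> (\<lambda>x. c * u x) \<in> ell2_on A"
  by (simp add: ell2_on_iff ell2_scale)

lemma ell2_on_uminus: "u \<in> ell2_on A \<Longrightarrow> (\<lambda>x. - u x) \<in> ell2_on A"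
  by (simp add: ell2_on_iff ell2_uminus)

lemma ell2_on_zero[simp]: "(\<lambda>x. 0) \<in> ell2_on A"
  by (simp add: ell2_on_iff)

lemma ell2_on_mono: "A \<subseteq> A' \<Longrightarrow> u \<in> ell2_on A \<Longrightarrow> u \<in> ell2_on A'"
  by (auto simp: ell2_on_iff)

lemma ell2_on_sum: "finite I \<Longrightarrow> (\<And>i. i \<in> I \<Longrightarrow> f i \<in> ell2_on A) \<Longrightarrow> (\<lambda>y. \<Sum>i\<in>I. c i * f i y) \<in> ell2_on A"
proof (induction I rule: finite_induct)
  case empty then show ?case by simp
next
  case (insert a I)
  have "(\<lambda>y. c a * f a y + (\<Sum>i\<in>I. c i * f i y)) \<in> ell2_on A"
    using insert by (intro ell2_on_add ell2_on_scale) auto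
  then show ?case using insert by simp
qed

lemma ell2_inner_sum_left:
  assumes w: "square_summable w" and I: "finite I" and f: "\<And>i. i \<in> I \<Longrightarrow> f i \<in> ell2_on UNIV"
  shows "ell2_inner (\<lambda>y. \<Sum>i\<in>I. c i * f i y) w = (\<Sum>i\<in>I. c i * ell2_inner (f i) w)"
  using I f
proof (induction I rule: finite_induct)
  case empty then show ?case by (simp add: ell2_inner_def)
next
  case (insert a I)
  have s: "square_summable (\<lambda>y. \<Sum>i\<in>I. c i * f i y)"
    using ell2_on_sum[of I f UNIV c] insert ell2_on_square_summable by blast
  have fa: "square_summable (f a)" using insert ell2_on_square_summable by blast
  have "ell2_inner (\<lambda>y. c a * f a y + (\<Sum>i\<in>I. c i * f i y)) w
      = ell2_inner (\<lambda>y. c a * f a y) w + ell2_inner (\<lambda>y. \<Sum>i\<in>I. c i * f i y) w"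
    by (rule ell2_inner_add_left[OF ell2_scale(1)[OF fa] s w])
  then show ?case using insert ell2_inner_scale_left[OF fa w] by simp
qed

lemma ell2_inner_disjoint_supports:
  assumes "\<And>x. u x = 0 \<or> v x = 0"
  shows "ell2_inner u v = 0"
proof -
  have "(\<lambda>x. u x * cnj (v x)) = (\<lambda>x. 0)" using assms by (metis complex_cnj_zero mult_eq_0_iff)
  then show ?thesis by (simp add: ell2_inner_def)
qed

definition zero_outside :: "'a set \<Rightarrow> ('a \<Rightarrow> complex) \<Rightarrow> 'a \<Rightarrow> complex" where
  "zero_outside A w = (\<lambda>x. if x \<in> A then w x else 0)"

lemma zero_outside_ell2:
  assumes "square_summable w"
  shows "zero_outside A w \<in> ell2_on A" "ell2_norm (zero_outside A w) \<le> ell2_norm w"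
proof -
  have *: "L2_set (\<lambda>x. cmod (zero_outside A w x)) F \<le> ell2_norm w" if "finite F" for F
  proof -
    have "L2_set (\<lambda>x. cmod (zero_outside A w x)) F \<le> L2_set (\<lambda>x. cmod (w x)) F"
      by (rule L2_set_mono) (auto simp: zero_outside_def)
    also have "\<dots> \<le> ell2_norm w" by (rule L2_set_le_ell2_norm[OF assms that])
    finally show ?thesis .
  qed
  show "zero_outside A w \<in> ell2_on A" using L2_set_bounded_ell2(1)[OF *]
    by (auto simp: ell2_on_iff zero_outside_def)
  show "ell2_norm (zero_outside A w) \<le> ell2_norm w" by (rule L2_set_bounded_ell2(2)[OF *])
qed

lemma zero_outside_id: "u \<in> ell2_on A \<Longrightarrow> zero_outside A u = u"
  by (auto simp: zero_outside_def ell2_on_iff)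

lemma ell2_inner_zero_outside: "ell2_inner (zero_outside A w) v = ell2_inner w (zero_outside A v)"
  unfolding ell2_inner_def zero_outside_def by (rule infsum_cong) auto

lemma ell2_inner_zero_outside_left:
  assumes "\<And>x. x \<in> E \<Longrightarrow> u x = 0"
  shows "ell2_inner g u = ell2_inner (zero_outside (- E) g) u"
  unfolding ell2_inner_def zero_outside_def by (rule infsum_cong) (use assms in auto)

lemma ell2_inner_zero_outside_right:
  assumes "\<And>x. x \<in> E \<Longrightarrow> u x = 0"
  shows "ell2_inner u w = ell2_inner u (zero_outside (- E) w)"
  unfolding ell2_inner_def zero_outside_def by (rule infsum_cong) (use assms in auto)

lemma ell2_norm_zero_outside_le_sum:
  assumes F: "finite F"
  shows "ell2_norm (zero_outside F w) \<le> (\<Sum>x\<in>F. cmod (w x))"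
proof -
  have *: "L2_set (\<lambda>x. cmod (zero_outside F w x)) F' \<le> (\<Sum>x\<in>F. cmod (w x))" if F': "finite F'" for F'
  proof -
    have "L2_set (\<lambda>x. cmod (zero_outside F w x)) F' \<le> (\<Sum>x\<in>F'. cmod (zero_outside F w x))"
      by (rule L2_set_le_sum) simp
    also have "\<dots> = (\<Sum>x\<in>F' \<inter> F. cmod (w x))"
      using F' by (intro sum.mono_neutral_cong_right) (auto simp: zero_outside_def)
    also have "\<dots> \<le> (\<Sum>x\<in>F. cmod (w x))"
      using F by (intro sum_mono2) auto
    finally show ?thesis .
  qed
  show ?thesis by (rule L2_set_bounded_ell2(2)[OF *])
qed

lemma ell2_tail_small:
  assumes g: "square_summable g" and e: "e > 0"
  shows "\<exists>E. finite E \<and> ell2_norm (zero_outside (- E) g) \<le> e"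
proof -
  have sm: "(\<lambda>x. (cmod (g x))^2) summable_on UNIV" using g by (simp add: square_summable_def)
  obtain E where E: "finite E" "dist (\<Sum>x\<in>E. (cmod (g x))^2) (infsum (\<lambda>x. (cmod (g x))^2) UNIV) \<le> e^2"
    using infsum_finite_approximation[OF sm, of "e^2"] e by auto
  have *: "L2_set (\<lambda>x. cmod (zero_outside (- E) g x)) F \<le> e" if F: "finite F" for F
  proof -
    have a: "(\<Sum>x\<in>F. (cmod (zero_outside (- E) g x))^2) = (\<Sum>x\<in>F - E. (cmod (g x))^2)"
      using F by (intro sum.mono_neutral_cong_right) (auto simp: zero_outside_def)
    have b: "(\<Sum>x\<in>F \<union> E. (cmod (g x))^2) = (\<Sum>x\<in>F - E. (cmod (g x))^2) + (\<Sum>x\<in>E. (cmod (g x))^2)"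
    proof -
      have disj: "(F - E) \<inter> E = {}" by blast
      have "(\<Sum>x\<in>(F - E) \<union> E. (cmod (g x))^2) = (\<Sum>x\<in>F - E. (cmod (g x))^2) + (\<Sum>x\<in>E. (cmod (g x))^2)"
        by (rule sum.union_disjoint) (use F E(1) disj in auto)
      then show ?thesis by simp
    qed
    have c: "(\<Sum>x\<in>F \<union> E. (cmod (g x))^2) \<le> infsum (\<lambda>x. (cmod (g x))^2) UNIV"
      using F E(1) by (intro finite_sum_le_infsum[OF sm]) auto
    have d: "infsum (\<lambda>x. (cmod (g x))^2) UNIV \<le> (\<Sum>x\<in>E. (cmod (g x))^2) + e^2"
      using E(2) by (simp add: dist_real_def)
    have "(\<Sum>x\<in>F. (cmod (zero_outside (- E) g x))^2) \<le> e^2" using a b c d by linarith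
    then have "sqrt (\<Sum>x\<in>F. (cmod (zero_outside (- E) g x))^2) \<le> sqrt (e^2)"
      by (rule real_sqrt_le_mono)
    then show ?thesis using e by (simp add: L2_set_def)
  qed
  show ?thesis using L2_set_bounded_ell2(2)[OF *] E(1) by blast
qed

lemma finite_support_approx:
  assumes u: "u \<in> ell2_on A" and \<delta>: "\<delta> > 0"
  shows "\<exists>u1\<in>ell2_on A. finite {x. u1 x \<noteq> 0} \<and> ell2_norm (\<lambda>x. u x - u1 x) \<le> \<delta> \<and>
    ell2_norm u1 \<le> ell2_norm u"
proof -
  obtain E where E: "finite E" "ell2_norm (zero_outside (- E) u) \<le> \<delta>"
    using ell2_tail_small[OF ell2_on_square_summable[OF u] \<delta>] by blast
  have "zero_outside E u \<in> ell2_on A"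
    using zero_outside_ell2(1)[OF ell2_on_square_summable[OF u]] ell2_on_outside[OF u]
    by (auto simp: ell2_on_iff zero_outside_def)
  moreover have "finite {x. zero_outside E u x \<noteq> 0}"
    by (rule finite_subset[OF _ E(1)]) (auto simp: zero_outside_def)
  moreover have "(\<lambda>x. u x - zero_outside E u x) = zero_outside (- E) u"
    by (auto simp: zero_outside_def)
  ultimately show ?thesis
    using E(2) zero_outside_ell2(2)[OF ell2_on_square_summable[OF u]] by (intro bexI) auto
qed

lemma almost_orthogonal_off_finite_set:
  assumes G: "finite G" "G \<subseteq> ell2_on UNIV" and e: "\<epsilon> > 0"
  shows "\<exists>E. finite E \<and> (\<forall>u\<in>ell2_on (- E). \<forall>g\<in>G. cmod (ell2_inner g u) \<le> \<epsilon> * ell2_norm u)"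
proof -
  have "\<forall>g\<in>G. \<exists>E. finite E \<and> ell2_norm (zero_outside (- E) g) \<le> \<epsilon>"
    using ell2_tail_small[OF _ e] G(2) ell2_on_square_summable by blast
  then obtain E where E: "\<And>g. g \<in> G \<Longrightarrow> finite (E g) \<and> ell2_norm (zero_outside (- E g) g) \<le> \<epsilon>"
    by metis
  have "cmod (ell2_inner g u) \<le> \<epsilon> * ell2_norm u" if u: "u \<in> ell2_on (- (\<Union>g\<in>G. E g))" and g: "g \<in> G" for u g
  proof -
    have "ell2_inner g u = ell2_inner (zero_outside (- E g) g) u"
      by (rule ell2_inner_zero_outside_left) (use ell2_on_outside[OF u] g in auto)
    also have "cmod \<dots> \<le> ell2_norm (zero_outside (- E g) g) * ell2_norm u"
      by (rule ell2_inner_Cauchy_Schwarz)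
        (use G(2) g zero_outside_ell2(1) ell2_on_square_summable u in blast)+
    also have "\<dots> \<le> \<epsilon> * ell2_norm u" using E[OF g] by (simp add: mult_right_mono ell2_norm_nonneg)
    finally show ?thesis .
  qed
  then show ?thesis using G(1) E by (intro exI[of _ "\<Union>g\<in>G. E g"]) auto
qed

definition unit_vec :: "'a \<Rightarrow> 'a \<Rightarrow> complex" where "unit_vec a = (\<lambda>x. if x = a then 1 else 0)"

lemma unit_vec_ell2_on: "a \<in> A \<Longrightarrow> unit_vec a \<in> ell2_on A"
  unfolding ell2_on_iff unit_vec_def by (auto intro: square_summable_finite_support)

lemma unit_vec_ell2_UNIV: "unit_vec a \<in> ell2_on UNIV"
  by (rule unit_vec_ell2_on) simp

lemma ell2_norm_unit_vec: "ell2_norm (unit_vec a) = 1"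
proof -
  have "infsum (\<lambda>x. (cmod (unit_vec a x))^2) UNIV = infsum (\<lambda>x. (cmod (unit_vec a x))^2) {a}"
    by (rule infsum_cong_neutral) (auto simp: unit_vec_def)
  then show ?thesis by (simp add: ell2_norm_def unit_vec_def)
qed

lemma ell2_inner_unit_vec: "ell2_inner w (unit_vec a) = w a"
proof -
  have "ell2_inner w (unit_vec a) = infsum (\<lambda>y. w y * cnj (unit_vec a y)) {a}"
    unfolding ell2_inner_def by (rule infsum_cong_neutral) (auto simp: unit_vec_def)
  then show ?thesis by (simp add: unit_vec_def)
qed

section \<open>Operators on \<open>\<ell>\<^sup>2(A)\<close>\<close>

definition linear_on :: "'a set \<Rightarrow> (('a \<Rightarrow> complex) \<Rightarrow> ('a \<Rightarrow> complex)) \<Rightarrow> bool" where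
  "linear_on A B \<longleftrightarrow> (\<forall>u\<in>ell2_on A. B u \<in> ell2_on A) \<and>
     (\<forall>u\<in>ell2_on A. \<forall>v\<in>ell2_on A. B (\<lambda>x. u x + v x) = (\<lambda>x. B u x + B v x)) \<and>
     (\<forall>u\<in>ell2_on A. \<forall>c. B (\<lambda>x. c * u x) = (\<lambda>x. c * B u x))"

definition norm_bounded_on :: "'a set \<Rightarrow> (('a \<Rightarrow> complex) \<Rightarrow> ('a \<Rightarrow> complex)) \<Rightarrow> real \<Rightarrow> bool" where
  "norm_bounded_on A B K \<longleftrightarrow> K \<ge> 0 \<and> (\<forall>u\<in>ell2_on A. ell2_norm (B u) \<le> K * ell2_norm u)"

definition hermitian_on :: "'a set \<Rightarrow> (('a \<Rightarrow> complex) \<Rightarrow> ('a \<Rightarrow> complex)) \<Rightarrow> bool" where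
  "hermitian_on A B \<longleftrightarrow> (\<forall>u\<in>ell2_on A. \<forall>v\<in>ell2_on A. ell2_inner (B u) v = ell2_inner u (B v))"

lemma linear_on_ell2_on: "linear_on A B \<Longrightarrow> u \<in> ell2_on A \<Longrightarrow> B u \<in> ell2_on A"
  by (simp add: linear_on_def)

lemma linear_on_add: "linear_on A B \<Longrightarrow> u \<in> ell2_on A \<Longrightarrow> v \<in> ell2_on A \<Longrightarrow> B (\<lambda>x. u x + v x) = (\<lambda>x. B u x + B v x)"
  by (simp add: linear_on_def)

lemma linear_on_scale: "linear_on A B \<Longrightarrow> u \<in> ell2_on A \<Longrightarrow> B (\<lambda>x. c * u x) = (\<lambda>x. c * B u x)"
  by (simp add: linear_on_def)

lemma linear_on_diff:
  assumes "linear_on A B" "u \<in> ell2_on A" "v \<in> ell2_on A"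
  shows "B (\<lambda>x. u x - v x) = (\<lambda>x. B u x - B v x)"
proof -
  have e: "(\<lambda>x. u x - v x) = (\<lambda>x. u x + (-1) * v x)" by simp
  have "B (\<lambda>x. u x + (-1) * v x) = (\<lambda>x. B u x + B (\<lambda>x. (-1) * v x) x)"
    by (rule linear_on_add[OF assms(1,2) ell2_on_scale[OF assms(3)]])
  also have "\<dots> = (\<lambda>x. B u x - B v x)" unfolding linear_on_scale[OF assms(1,3), of "-1"] by simp
  finally show ?thesis unfolding e .
qed

lemma linear_on_zero: "linear_on A B \<Longrightarrow> B (\<lambda>y. 0) = (\<lambda>y. 0)"
  using linear_on_scale[of A B "\<lambda>y. 0" 0] by simp

lemma linear_on_sum:
  assumes lin: "linear_on A B"
  shows "finite I \<Longrightarrow> (\<And>i. i \<in> I \<Longrightarrow> f i \<in> ell2_on A) \<Longrightarrow>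
    B (\<lambda>y. \<Sum>i\<in>I. c i * f i y) = (\<lambda>y. \<Sum>i\<in>I. c i * B (f i) y)"
proof (induction I rule: finite_induct)
  case empty then show ?case using linear_on_zero[OF lin] by simp
next
  case (insert a I)
  have s: "(\<lambda>y. \<Sum>i\<in>I. c i * f i y) \<in> ell2_on A" using insert by (intro ell2_on_sum) auto
  have fa: "f a \<in> ell2_on A" using insert by auto
  have "B (\<lambda>y. c a * f a y + (\<Sum>i\<in>I. c i * f i y)) = (\<lambda>y. B (\<lambda>y. c a * f a y) y + B (\<lambda>y. \<Sum>i\<in>I. c i * f i y) y)"
    by (rule linear_on_add[OF lin ell2_on_scale[OF fa] s])
  also have "\<dots> = (\<lambda>y. c a * B (f a) y + (\<Sum>i\<in>I. c i * B (f i) y))"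
    using insert linear_on_scale[OF lin fa] by simp
  finally show ?case using insert by simp
qed

lemma norm_bounded_onD: "norm_bounded_on A B K \<Longrightarrow> u \<in> ell2_on A \<Longrightarrow> ell2_norm (B u) \<le> K * ell2_norm u"
  by (simp add: norm_bounded_on_def)

lemma norm_bounded_on_nonneg: "norm_bounded_on A B K \<Longrightarrow> K \<ge> 0"
  by (simp add: norm_bounded_on_def)

lemma norm_bounded_on_lipschitz:
  assumes lin: "linear_on A B" and bnd: "norm_bounded_on A B K" and u: "u \<in> ell2_on A" and w: "w \<in> ell2_on A"
  shows "ell2_norm (B w) \<le> ell2_norm (B u) + K * ell2_norm (\<lambda>x. u x - w x)"
proof -
  have d: "(\<lambda>x. u x - w x) \<in> ell2_on A" by (rule ell2_on_diff[OF u w])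
  have "B w = (\<lambda>x. B u x - B (\<lambda>x. u x - w x) x)" by (simp add: linear_on_diff[OF lin u w])
  then have "ell2_norm (B w) \<le> ell2_norm (B u) + ell2_norm (B (\<lambda>x. u x - w x))"
    using ell2_diff(2) ell2_on_square_summable linear_on_ell2_on[OF lin] u d by metis
  then show ?thesis using norm_bounded_onD[OF bnd d] by linarith
qed

lemma approx_kernel_not_invertible:
  assumes lin: "linear_on A B"
    and ap: "\<And>e. e > 0 \<Longrightarrow> \<exists>u\<in>ell2_on A. ell2_norm u = 1 \<and> ell2_norm (B u) < e"
  shows "\<not> invertible_on A B"
proof
  assume "invertible_on A B"
  then obtain S C where S: "\<forall>u\<in>ell2_on A. S (B u) = u" and Sb: "\<forall>u\<in>ell2_on A. ell2_norm (S u) \<le> C * ell2_norm u"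
    unfolding invertible_on_def bounded_on_def by blast
  have "1 / (\<bar>C\<bar> + 1) > 0" by (simp add: add_pos_nonneg)
  then obtain u where u: "u \<in> ell2_on A" "ell2_norm u = 1" "ell2_norm (B u) < 1 / (\<bar>C\<bar> + 1)"
    using ap by blast
  have "1 = ell2_norm (S (B u))" using S u by simp
  also have "\<dots> \<le> C * ell2_norm (B u)" using Sb linear_on_ell2_on[OF lin u(1)] by blast
  also have "\<dots> \<le> \<bar>C\<bar> * ell2_norm (B u)" by (simp add: mult_right_mono ell2_norm_nonneg)
  also have "\<dots> \<le> \<bar>C\<bar> * (1 / (\<bar>C\<bar> + 1))" using u(3) by (intro mult_left_mono) auto
  also have "\<dots> < 1" by (simp add: field_simps)
  finally show False by simp
qed

lemma nonneg_hermitian_quadratic: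
  assumes lin: "linear_on A B" and herm: "hermitian_on A B"
    and psd: "\<And>u. u \<in> ell2_on A \<Longrightarrow> Re (ell2_inner (B u) u) \<ge> 0"
    and u: "u \<in> ell2_on A"
  shows "0 \<le> Re (ell2_inner (B u) u) - 2 * s * (ell2_norm (B u))^2 + s^2 * Re (ell2_inner (B (B u)) (B u))"
proof -
  define w where "w = B u"
  have w: "w \<in> ell2_on A" using linear_on_ell2_on[OF lin u] by (simp add: w_def)
  have sw: "(\<lambda>x. complex_of_real s * w x) \<in> ell2_on A" using ell2_on_scale[OF w] .
  define z where "z = (\<lambda>x. u x - complex_of_real s * w x)"
  have z: "z \<in> ell2_on A" unfolding z_def using ell2_on_diff[OF u sw] .
  have Bz: "B z = (\<lambda>x. B u x - complex_of_real s * B w x)"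
    unfolding z_def using linear_on_diff[OF lin u sw] linear_on_scale[OF lin w] by simp
  have l: "square_summable u" "square_summable w" "square_summable (B u)" "square_summable (B w)"
    using u w linear_on_ell2_on[OF lin w] ell2_on_square_summable by (auto simp: w_def)
  have "ell2_inner (B z) z = ell2_inner (B u) u - complex_of_real s * ell2_inner (B u) w
      - complex_of_real s * ell2_inner (B w) u + (complex_of_real s)^2 * ell2_inner (B w) w"
    unfolding Bz unfolding z_def using l
    by (simp add: ell2_inner_diff_left ell2_inner_diff_right ell2_inner_scale_left
        ell2_inner_scale_right ell2_scale ell2_diff algebra_simps power2_eq_square)
  moreover have "ell2_inner (B u) w = complex_of_real ((ell2_norm w)^2)"
    using ell2_inner_self[OF l(2)] by (simp add: w_def)
  moreover have "ell2_inner (B w) u = complex_of_real ((ell2_norm w)^2)"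
    using herm u w ell2_inner_self[OF l(2)] unfolding hermitian_on_def w_def by metis
  ultimately have "Re (ell2_inner (B z) z)
      = Re (ell2_inner (B u) u) - 2 * s * (ell2_norm w)^2 + s^2 * Re (ell2_inner (B w) w)"
    by (simp add: power2_eq_square)
  then show ?thesis using psd[OF z] by (simp add: w_def)
qed

text \<open>Cauchy--Schwarz for the semi-inner product \<open>\<langle>B u, v\<rangle>\<close>, via the quadratic above at \<open>s = 1/K\<close>.\<close>
lemma nonneg_hermitian_norm_power2_le:
  assumes lin: "linear_on A B" and bnd: "norm_bounded_on A B K" and herm: "hermitian_on A B"
    and psd: "\<And>u. u \<in> ell2_on A \<Longrightarrow> Re (ell2_inner (B u) u) \<ge> 0"
    and u: "u \<in> ell2_on A"
  shows "(ell2_norm (B u))^2 \<le> K * Re (ell2_inner (B u) u)"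
proof -
  define w where "w = B u"
  have w: "w \<in> ell2_on A" using linear_on_ell2_on[OF lin u] by (simp add: w_def)
  define N where "N = (ell2_norm w)^2"
  define P where "P = Re (ell2_inner (B u) u)"
  have K: "K \<ge> 0" using norm_bounded_on_nonneg[OF bnd] .
  have R_le: "Re (ell2_inner (B w) w) \<le> K * N"
  proof -
    have "Re (ell2_inner (B w) w) \<le> ell2_norm (B w) * ell2_norm w"
      using complex_Re_le_cmod ell2_inner_Cauchy_Schwarz ell2_on_square_summable w
        linear_on_ell2_on[OF lin w] order_trans by metis
    also have "\<dots> \<le> K * ell2_norm w * ell2_norm w"
      using norm_bounded_onD[OF bnd w] by (simp add: mult_right_mono ell2_norm_nonneg)
    finally show ?thesis by (simp add: N_def power2_eq_square mult.assoc)
  qed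
  show ?thesis
  proof (cases "N = 0")
    case True
    then show ?thesis using K psd[OF u] by (simp add: N_def w_def)
  next
    case False
    have "K \<noteq> 0"
      using False norm_bounded_onD[OF bnd u] ell2_norm_nonneg[of w] by (auto simp: N_def w_def)
    with K have K: "K > 0" by simp
    have "0 \<le> P - 2 * (1/K) * N + (1/K)^2 * Re (ell2_inner (B w) w)"
      using nonneg_hermitian_quadratic[OF lin herm psd u, of "1/K"] by (simp add: P_def N_def w_def)
    also have "\<dots> \<le> P - 2 * (1/K) * N + (1/K)^2 * (K * N)"
      using R_le by (simp add: mult_left_mono)
    also have "\<dots> = P - N / K" using K by (simp add: field_simps power2_eq_square)
    finally show ?thesis using K by (simp add: N_def w_def P_def field_simps)
  qed
qed

lemma coercive_norm_lower_bound:
  assumes lin: "linear_on A B" and c: "c > 0"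
    and co: "\<And>u. u \<in> ell2_on A \<Longrightarrow> Re (ell2_inner (B u) u) \<ge> c * (ell2_norm u)^2"
    and u: "u \<in> ell2_on A"
  shows "c * ell2_norm u \<le> ell2_norm (B u)"
proof (cases "ell2_norm u = 0")
  case True then show ?thesis by (simp add: ell2_norm_nonneg)
next
  case False
  then have p: "ell2_norm u > 0" using ell2_norm_nonneg[of u] by linarith
  have "c * ell2_norm u * ell2_norm u \<le> Re (ell2_inner (B u) u)" using co[OF u]
    by (simp add: power2_eq_square)
  also have "\<dots> \<le> cmod (ell2_inner (B u) u)" by (rule complex_Re_le_cmod)
  also have "\<dots> \<le> ell2_norm (B u) * ell2_norm u"
    using ell2_inner_Cauchy_Schwarz ell2_on_square_summable u linear_on_ell2_on[OF lin u] by blast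
  finally show ?thesis using p by simp
qed

lemma coercive_contraction:
  assumes lin: "linear_on A B" and bnd: "norm_bounded_on A B K" and c: "c > 0"
    and co: "\<And>u. u \<in> ell2_on A \<Longrightarrow> Re (ell2_inner (B u) u) \<ge> c * (ell2_norm u)^2"
    and u: "u \<in> ell2_on A"
  shows "ell2_norm (\<lambda>x. u x - complex_of_real (c / (K^2 + c^2)) * B u x)
         \<le> sqrt (1 - c^2 / (K^2 + c^2)) * ell2_norm u"
proof -
  define K' where "K' = K^2 + c^2"
  have K'p: "K' > 0" using c by (simp add: K'_def add_nonneg_pos)
  define t where "t = c / K'"
  have tp: "t > 0" using c K'p by (simp add: t_def)
  have Bu: "B u \<in> ell2_on A" using linear_on_ell2_on[OF lin u] .
  have q0: "c^2 / K' \<le> 1" using K'p by (simp add: K'_def)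
  have l: "square_summable u" "square_summable (B u)" using u Bu ell2_on_square_summable by auto
  have e1: "(ell2_norm (\<lambda>x. u x - complex_of_real t * B u x))^2
      = (ell2_norm u)^2 - 2 * Re (ell2_inner (\<lambda>x. complex_of_real t * B u x) u)
        + (ell2_norm (\<lambda>x. complex_of_real t * B u x))^2"
    by (rule ell2_norm_diff_power2) (use l ell2_scale in auto)
  have e2: "Re (ell2_inner (\<lambda>x. complex_of_real t * B u x) u) = t * Re (ell2_inner (B u) u)"
    using ell2_inner_scale_left[OF l(2) l(1), of "complex_of_real t"] by simp
  have e3: "ell2_norm (\<lambda>x. complex_of_real t * B u x) = t * ell2_norm (B u)"
    using ell2_scale(2)[OF l(2)] tp by simp
  have "(ell2_norm (\<lambda>x. u x - complex_of_real t * B u x))^2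
        \<le> (ell2_norm u)^2 - 2 * t * (c * (ell2_norm u)^2) + (t * (K * ell2_norm u))^2"
  proof -
    have a: "2 * t * (c * (ell2_norm u)^2) \<le> 2 * t * Re (ell2_inner (B u) u)"
      using co[OF u] tp by simp
    have b: "(t * ell2_norm (B u))^2 \<le> (t * (K * ell2_norm u))^2"
      using norm_bounded_onD[OF bnd u] tp
        by (intro power_mono mult_left_mono) (auto simp: ell2_norm_nonneg)
    show ?thesis unfolding e1 e2 e3 using a b by linarith
  qed
  also have "\<dots> \<le> (1 - c^2 / K') * (ell2_norm u)^2"
  proof -
    have "K^2 \<le> K'" by (simp add: K'_def)
    then have "t^2 * K^2 \<le> t^2 * K'" by (simp add: mult_left_mono)
    then have "1 - 2 * t * c + t^2 * K^2 \<le> 1 - c^2 / K'"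
      using K'p by (simp add: t_def field_simps power2_eq_square)
    then have "(1 - 2 * t * c + t^2 * K^2) * (ell2_norm u)^2 \<le> (1 - c^2 / K') * (ell2_norm u)^2"
      by (simp add: mult_right_mono)
    then show ?thesis by (simp add: algebra_simps power2_eq_square)
  qed
  also have "\<dots> = (sqrt (1 - c^2 / K') * ell2_norm u)^2"
  proof -
    have "c^2 \<le> K'" by (simp add: K'_def)
    then have "c^2 / K' \<le> 1" using K'p by simp
    then show ?thesis by (simp add: power_mult_distrib)
  qed
  finally have "(ell2_norm (\<lambda>x. u x - complex_of_real t * B u x))^2 \<le> (sqrt (1 - c^2 / K') * ell2_norm u)^2" .
  then have "ell2_norm (\<lambda>x. u x - complex_of_real t * B u x) \<le> sqrt (1 - c^2 / K') * ell2_norm u"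
    by (rule power2_le_imp_le) (use q0 in \<open>simp add: ell2_norm_nonneg\<close>)
  then show ?thesis by (simp add: t_def K'_def)
qed

lemma contraction_fixpoint_ell2_on:
  assumes maps: "\<And>u. u \<in> ell2_on A \<Longrightarrow> \<Phi> u \<in> ell2_on A"
    and contr: "\<And>u w. u \<in> ell2_on A \<Longrightarrow> w \<in> ell2_on A \<Longrightarrow>
      ell2_norm (\<lambda>x. \<Phi> u x - \<Phi> w x) \<le> q * ell2_norm (\<lambda>x. u x - w x)"
    and q: "0 \<le> q" "q < 1"
  shows "\<exists>v\<in>ell2_on A. \<Phi> v = v"
proof -
  define xs where "xs n = (\<Phi> ^^ n) (\<lambda>x. 0)" for n
  have xsV: "xs n \<in> ell2_on A" for n
    by (induction n) (auto simp: xs_def maps)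
  define R where "R = ell2_norm (\<lambda>x. xs 1 x - xs 0 x)"
  have R0: "R \<ge> 0" by (simp add: R_def ell2_norm_nonneg)
  have step: "ell2_norm (\<lambda>x. xs (Suc n) x - xs n x) \<le> q^n * R" for n
  proof (induction n)
    case 0 then show ?case by (simp add: R_def)
  next
    case (Suc n)
    have "ell2_norm (\<lambda>x. xs (Suc (Suc n)) x - xs (Suc n) x) \<le> q * ell2_norm (\<lambda>x. xs (Suc n) x - xs n x)"
      using contr[OF xsV xsV, of "Suc n" n] by (simp add: xs_def)
    also have "\<dots> \<le> q * (q^n * R)" using Suc q by (simp add: mult_left_mono)
    finally show ?case by simp
  qed
  define b where "b n = R * q^n / (1 - q)" for n
  have "(\<lambda>n. R * q^n / (1 - q)) \<longlonglongrightarrow> R * 0 / (1 - q)"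
    by (intro tendsto_intros LIMSEQ_power_zero) (use q in auto)
  then have b0: "b \<longlonglongrightarrow> 0" by (simp add: b_def[abs_def])
  have cauchy: "ell2_norm (\<lambda>x. xs m x - xs n x) \<le> b n" if "n \<le> m" for n m
  proof -
    have "ell2_norm (\<lambda>x. xs m x - xs n x) \<le> R * (q^n - q^m) / (1 - q)"
      using that
    proof (induction m rule: dec_induct)
      case (step m)
      have "ell2_norm (\<lambda>x. xs (Suc m) x - xs n x)
          \<le> ell2_norm (\<lambda>x. xs (Suc m) x - xs m x) + ell2_norm (\<lambda>x. xs m x - xs n x)"
        by (rule ell2_norm_diff_triangle) (use xsV ell2_on_square_summable in auto)
      also have "\<dots> \<le> q^m * R + R * (q^n - q^m) / (1 - q)" using step.IH \<open>\<And>n. _ \<le> q^n * R\<close>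
        by (intro add_mono) auto
      also have "\<dots> = R * (q^n - q^Suc m) / (1 - q)" using q by (simp add: field_simps)
      finally show ?case .
    qed simp
    also have "\<dots> \<le> b n"
      using q R0 by (auto simp: b_def intro!: divide_right_mono mult_left_mono)
    finally show ?thesis .
  qed
  obtain v where v: "v \<in> ell2_on A" and vb: "\<And>n. ell2_norm (\<lambda>x. v x - xs n x) \<le> b n"
    using ell2_on_complete[OF xsV b0 cauchy] by blast
  have "ell2_norm (\<lambda>x. \<Phi> v x - v x) \<le> q * b n + b (Suc n)" for n
  proof -
    have "ell2_norm (\<lambda>x. \<Phi> v x - v x)
        \<le> ell2_norm (\<lambda>x. \<Phi> v x - xs (Suc n) x) + ell2_norm (\<lambda>x. xs (Suc n) x - v x)"
      by (rule ell2_norm_diff_triangle) (use xsV ell2_on_square_summable v maps in auto)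
    also have "ell2_norm (\<lambda>x. \<Phi> v x - xs (Suc n) x) \<le> q * b n"
      using contr[OF v xsV, of n] vb[of n] q
        by (simp add: xs_def) (meson mult_left_mono order_trans)
    finally show ?thesis using vb[of "Suc n"] ell2_norm_diff_commute[of "xs (Suc n)" v] by linarith
  qed
  moreover have "(\<lambda>n. q * b n + b (Suc n)) \<longlonglongrightarrow> 0"
    using tendsto_add[OF tendsto_mult_left[OF b0, of q] LIMSEQ_Suc[OF b0]] by simp
  ultimately have "ell2_norm (\<lambda>x. \<Phi> v x - v x) \<le> 0"
    by (intro LIMSEQ_le_const[of "\<lambda>n. q * b n + b (Suc n)"]) auto
  then show ?thesis using ell2_eqI_norm_diff ell2_on_square_summable maps v by blast
qed

lemma coercive_surjective:
  assumes lin: "linear_on A B" and bnd: "norm_bounded_on A B K" and c: "c > 0"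
    and co: "\<And>u. u \<in> ell2_on A \<Longrightarrow> Re (ell2_inner (B u) u) \<ge> c * (ell2_norm u)^2"
    and y: "y \<in> ell2_on A"
  shows "\<exists>v\<in>ell2_on A. B v = y"
proof -
  define t where "t = c / (K^2 + c^2)"
  have t: "t > 0" using c by (simp add: t_def add_nonneg_pos)
  define q where "q = sqrt (1 - c^2 / (K^2 + c^2))"
  have q: "0 \<le> q" "q < 1"
    using c by (auto simp: q_def add_nonneg_pos)
  \<comment> \<open>Lax--Milgram: for this \<open>t\<close>, \<open>v \<mapsto> v - t (B v - y)\<close> is a contraction\<close>
  define \<Phi> where "\<Phi> v = (\<lambda>x. v x - complex_of_real t * B v x + complex_of_real t * y x)" for v
  have maps: "\<Phi> v \<in> ell2_on A" if "v \<in> ell2_on A" for v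
    unfolding \<Phi>_def
      by (intro ell2_on_add ell2_on_diff ell2_on_scale linear_on_ell2_on[OF lin] that y)
  have contr: "ell2_norm (\<lambda>x. \<Phi> u x - \<Phi> w x) \<le> q * ell2_norm (\<lambda>x. u x - w x)"
    if "u \<in> ell2_on A" "w \<in> ell2_on A" for u w
  proof -
    have "(\<lambda>x. \<Phi> u x - \<Phi> w x) = (\<lambda>x. (u x - w x) - complex_of_real t * B (\<lambda>x. u x - w x) x)"
      by (auto simp: \<Phi>_def linear_on_diff[OF lin that] algebra_simps)
    then show ?thesis
      using coercive_contraction[OF lin bnd c co ell2_on_diff[OF that]] by (simp add: q_def t_def)
  qed
  obtain v where v: "v \<in> ell2_on A" "\<Phi> v = v"
    using contraction_fixpoint_ell2_on[OF maps contr q] by blast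
  have "complex_of_real t * (y x - B v x) = 0" for x
    using fun_cong[OF v(2), of x] by (simp add: \<Phi>_def algebra_simps)
  then have "B v = y" using t by (auto intro!: ext)
  then show ?thesis using v by blast
qed

lemma coercive_invertible:
  assumes lin: "linear_on A B" and bnd: "norm_bounded_on A B K" and c: "c > 0"
    and co: "\<And>u. u \<in> ell2_on A \<Longrightarrow> Re (ell2_inner (B u) u) \<ge> c * (ell2_norm u)^2"
  shows "invertible_on A B"
proof -
  define S where "S y = (SOME v. v \<in> ell2_on A \<and> B v = y)" for y
  have S: "S y \<in> ell2_on A \<and> B (S y) = y" if "y \<in> ell2_on A" for y
  proof -
    have "\<exists>v. v \<in> ell2_on A \<and> B v = y" using coercive_surjective[of A B K c y] lin bnd c co that
      by blast
    then show ?thesis unfolding S_def by (rule someI_ex)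
  qed
  have low: "c * ell2_norm u \<le> ell2_norm (B u)" if "u \<in> ell2_on A" for u
    by (rule coercive_norm_lower_bound[OF lin c co that])
  have bS: "bounded_on A S"
    unfolding bounded_on_def
  proof (intro conjI ballI exI)
    fix u assume u: "u \<in> ell2_on A"
    show "S u \<in> ell2_on A" using S[OF u] by blast
    have "c * ell2_norm (S u) \<le> ell2_norm u" using low[of "S u"] S[OF u] by simp
    then show "ell2_norm (S u) \<le> (1 / c) * ell2_norm u" using c by (simp add: field_simps)
  qed
  have "S (B u) = u" if u: "u \<in> ell2_on A" for u
  proof -
    have Bu: "B u \<in> ell2_on A" using linear_on_ell2_on[OF lin u] .
    have "B (\<lambda>x. S (B u) x - u x) = (\<lambda>x. 0)"
      using linear_on_diff[OF lin conjunct1[OF S[OF Bu]] u] S[OF Bu] by simp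
    then have "c * ell2_norm (\<lambda>x. S (B u) x - u x) \<le> 0"
      using low[OF ell2_on_diff[OF conjunct1[OF S[OF Bu]] u]] by simp
    then have "ell2_norm (\<lambda>x. S (B u) x - u x) \<le> 0" using c by (simp add: mult_le_0_iff)
    then show ?thesis using ell2_eqI_norm_diff ell2_on_square_summable S[OF Bu] u by blast
  qed
  then show ?thesis unfolding invertible_on_def using bS S by blast
qed

section \<open>Fredholm criteria\<close>

lemma invertible_on_cong_imp:
  assumes e: "\<And>u. u \<in> ell2_on A \<Longrightarrow> B u = B' u" and inv: "invertible_on A B"
  shows "invertible_on A B'"
proof -
  obtain S where S: "bounded_on A S" "\<forall>u\<in>ell2_on A. S (B u) = u \<and> B (S u) = u"
    using inv unfolding invertible_on_def by blast
  have SV: "\<forall>u\<in>ell2_on A. S u \<in> ell2_on A" using S(1) by (simp add: bounded_on_def)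
  have "\<forall>u\<in>ell2_on A. S (B' u) = u \<and> B' (S u) = u"
    using S(2) SV e by auto
  then show ?thesis unfolding invertible_on_def using S(1) by blast
qed

lemma invertible_on_cong:
  assumes "\<And>u. u \<in> ell2_on A \<Longrightarrow> B u = B' u"
  shows "invertible_on A B \<longleftrightarrow> invertible_on A B'"
  using invertible_on_cong_imp[of A B B'] invertible_on_cong_imp[of A B' B] assms by metis

lemma lincomb_reindex:
  assumes F: "finite F0" and g: "\<And>x z. x \<in> F0 \<Longrightarrow> z \<in> F0 \<Longrightarrow> g x z = (if z = x then 1 else 0)"
  shows "lincomb (g ` F0) (\<lambda>f. \<Sum>z\<in>F0. f z * u z) = (\<lambda>y. \<Sum>x\<in>F0. u x * g x y)"
proof -
  have inj: "inj_on g F0"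
  proof (rule inj_onI)
    fix x x' assume "x \<in> F0" "x' \<in> F0" "g x = g x'"
    then have "g x x = g x' x" by simp
    then show "x = x'" using g \<open>x \<in> F0\<close> \<open>x' \<in> F0\<close> by (auto split: if_splits)
  qed
  have c: "(\<Sum>z\<in>F0. g x z * u z) = u x" if x: "x \<in> F0" for x
  proof -
    have "(\<Sum>z\<in>F0. g x z * u z) = (\<Sum>z\<in>F0. if z = x then u z else 0)"
      by (rule sum.cong) (use g x in auto)
    also have "\<dots> = u x" using F x by simp
    finally show ?thesis .
  qed
  show ?thesis unfolding lincomb_def
    by (rule ext) (simp add: sum.reindex[OF inj] c)
qed

lemma sum_unit_vec:
  fixes r :: "'a \<Rightarrow> complex"
  assumes F: "finite F0" and r: "\<And>y. y \<notin> F0 \<Longrightarrow> r y = 0"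
  shows "(\<lambda>y. \<Sum>x\<in>F0. r x * (if y = x then 1 else 0)) = r"
proof
  fix y
  have "(\<Sum>x\<in>F0. r x * (if y = x then 1 else 0)) = (\<Sum>x\<in>F0. if x = y then r x else 0)"
    by (rule sum.cong) auto
  also have "\<dots> = r y" using F r by (cases "y \<in> F0") auto
  finally show "(\<Sum>x\<in>F0. r x * (if y = x then 1 else 0)) = r y" .
qed

lemma finite_kernel_if_compression_invertible:
  assumes lin: "linear_on UNIV B" and F0: "finite (- A)"
    and inv: "invertible_on A (\<lambda>u. zero_outside A (B u))"
  shows "\<exists>F. finite F \<and> F \<subseteq> ell2_on UNIV \<and>
    (\<forall>u\<in>ell2_on UNIV. B u = (\<lambda>_. 0) \<longrightarrow> (\<exists>c. u = lincomb F c))"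
proof -
  obtain S where Sb: "bounded_on A S"
    and S: "\<And>u. u \<in> ell2_on A \<Longrightarrow> S (zero_outside A (B u)) = u \<and> zero_outside A (B (S u)) = u"
    using inv unfolding invertible_on_def by blast
  have SV: "S u \<in> ell2_on A" if "u \<in> ell2_on A" for u using Sb that by (simp add: bounded_on_def)
  have onA: "u \<in> ell2_on UNIV" if "u \<in> ell2_on A" for u using ell2_on_mono[OF subset_UNIV that] .
  have compr: "zero_outside A (B u) \<in> ell2_on A" if "u \<in> ell2_on UNIV" for u
    using zero_outside_ell2(1) ell2_on_square_summable linear_on_ell2_on[OF lin that] by blast
  define g where "g x = (\<lambda>z. unit_vec x z - S (zero_outside A (B (unit_vec x))) z)" for x
  have gV: "g x \<in> ell2_on UNIV" for x
    unfolding g_def by (intro ell2_on_diff unit_vec_ell2_UNIV onA SV compr)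
  have g_outside: "g x z = (if z = x then 1 else 0)" if "x \<in> - A" "z \<in> - A" for x z
    using ell2_on_outside[OF SV[OF compr[OF unit_vec_ell2_UNIV]], of z] that
    by (simp add: g_def unit_vec_def)
  \<comment> \<open>each \<open>g x\<close> is annihilated by the compression, hence \<open>B (g x)\<close> vanishes on \<open>A\<close>\<close>
  have Bg: "B (g x) z = 0" if "z \<in> A" for x z
  proof -
    have y: "zero_outside A (B (unit_vec x)) \<in> ell2_on A" by (rule compr[OF unit_vec_ell2_UNIV])
    have "B (g x) = (\<lambda>z. B (unit_vec x) z - B (S (zero_outside A (B (unit_vec x)))) z)"
      unfolding g_def by (rule linear_on_diff[OF lin]) (use y SV onA unit_vec_ell2_UNIV in auto)
    then show ?thesis
      using fun_cong[OF conjunct2[OF S[OF y]], of z] that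
      by (simp add: zero_outside_def)
  qed
  have S0: "S (\<lambda>_. 0) = (\<lambda>_. 0)"
    using S[OF ell2_on_zero] linear_on_zero[OF lin] by (simp add: zero_outside_def)
  have "\<exists>c. u = lincomb (g ` (- A)) c" if u: "u \<in> ell2_on UNIV" and Bu: "B u = (\<lambda>_. 0)" for u
  proof -
    define w where "w = (\<lambda>z. u z - (\<Sum>x\<in>- A. u x * g x z))"
    have sV: "(\<lambda>z. \<Sum>x\<in>- A. u x * g x z) \<in> ell2_on UNIV" by (rule ell2_on_sum[OF F0 gV])
    have "w z = 0" if "z \<notin> A" for z
    proof -
      have "(\<Sum>x\<in>- A. u x * g x z) = (\<Sum>x\<in>- A. if x = z then u x else 0)"
        by (rule sum.cong) (use g_outside that in auto)
      then show ?thesis using F0 that by (simp add: w_def)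
    qed
    then have wA: "w \<in> ell2_on A"
      using ell2_on_diff[OF u sV] by (simp add: ell2_on_iff w_def)
    have "B w = (\<lambda>z. B u z - (\<Sum>x\<in>- A. u x * B (g x) z))"
      unfolding w_def linear_on_diff[OF lin u sV] linear_on_sum[OF lin F0 gV] by simp
    then have "zero_outside A (B w) = (\<lambda>_. 0)"
      using Bu Bg by (auto simp: zero_outside_def intro!: ext sum.neutral)
    then have "w = (\<lambda>_. 0)" using S[OF wA] S0 by simp
    then have "u = (\<lambda>z. \<Sum>x\<in>- A. u x * g x z)" unfolding w_def by (metis eq_iff_diff_eq_0)
    also have "\<dots> = lincomb (g ` (- A)) (\<lambda>f. \<Sum>z\<in>- A. f z * u z)"
      by (rule lincomb_reindex[OF F0 g_outside, symmetric])
    finally show ?thesis by blast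
  qed
  then show ?thesis using F0 gV by (intro exI[of _ "g ` (- A)"]) auto
qed

lemma finite_cokernel_if_compression_invertible:
  assumes lin: "linear_on UNIV B" and F0: "finite (- A)"
    and inv: "invertible_on A (\<lambda>u. zero_outside A (B u))"
  shows "\<exists>F. finite F \<and> F \<subseteq> ell2_on UNIV \<and>
    (\<forall>v\<in>ell2_on UNIV. \<exists>u\<in>ell2_on UNIV. \<exists>c. v = (\<lambda>x. B u x + lincomb F c x))"
proof -
  obtain S where Sb: "bounded_on A S"
    and S: "\<And>u. u \<in> ell2_on A \<Longrightarrow> zero_outside A (B (S u)) = u"
    using inv unfolding invertible_on_def by blast
  have "\<exists>u\<in>ell2_on UNIV. \<exists>c. v = (\<lambda>x. B u x + lincomb (unit_vec ` (- A)) c x)"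
    if v: "v \<in> ell2_on UNIV" for v
  proof -
    have vA: "zero_outside A v \<in> ell2_on A"
      by (rule zero_outside_ell2(1)[OF ell2_on_square_summable[OF v]])
    define u where "u = S (zero_outside A v)"
    have uA: "u \<in> ell2_on A" using Sb vA by (simp add: bounded_on_def u_def)
    define r where "r = (\<lambda>z. v z - B u z)"
    have r0: "r z = 0" if "z \<notin> - A" for z
      using fun_cong[OF S[OF vA], of z] that by (simp add: r_def u_def zero_outside_def)
    have "lincomb (unit_vec ` (- A)) (\<lambda>f. \<Sum>z\<in>- A. f z * r z) = (\<lambda>y. \<Sum>x\<in>- A. r x * unit_vec x y)"
      by (rule lincomb_reindex[OF F0]) (simp add: unit_vec_def)
    also have "\<dots> = r" using sum_unit_vec[OF F0 r0] by (simp add: unit_vec_def)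
    finally have "v = (\<lambda>x. B u x + lincomb (unit_vec ` (- A)) (\<lambda>f. \<Sum>z\<in>- A. f z * r z) x)"
      by (simp add: r_def)
    then show ?thesis using ell2_on_mono[OF subset_UNIV uA] by blast
  qed
  then show ?thesis using F0 unit_vec_ell2_UNIV by (intro exI[of _ "unit_vec ` (- A)"]) auto
qed

lemma fredholm_if_compression_invertible:
  assumes "linear_on UNIV B" "finite (- A)" "invertible_on A (\<lambda>u. zero_outside A (B u))"
  shows "fredholm_on UNIV B"
  unfolding fredholm_on_def
  using finite_kernel_if_compression_invertible[OF assms]
    finite_cokernel_if_compression_invertible[OF assms] by blast

lemma disjoint_supports_sequence:
  fixes P :: "nat \<Rightarrow> ('a \<Rightarrow> 'b::zero) \<Rightarrow> bool"
  assumes ex: "\<And>k D. finite D \<Longrightarrow> \<exists>u. finite {x. u x \<noteq> 0} \<and> (\<forall>x\<in>D. u x = 0) \<and> P k u"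
  shows "\<exists>u. (\<forall>k. P k (u k)) \<and> (\<forall>j k x. j \<noteq> k \<longrightarrow> u j x = 0 \<or> u k x = 0)"
proof -
  define Q where "Q k D u \<longleftrightarrow> finite {x. u x \<noteq> 0} \<and> (\<forall>x\<in>D. u x = 0) \<and> P k u" for k D u
  define nxt where "nxt k D = (SOME u. Q k D u)" for k D
  \<comment> \<open>\<open>Ds k\<close> collects the supports of the first \<open>k\<close> terms, which later terms must avoid\<close>
  define Ds where "Ds = rec_nat {} (\<lambda>k D. D \<union> {x. nxt k D x \<noteq> 0})"
  have Ds0: "Ds 0 = {}" and DsS: "Ds (Suc k) = Ds k \<union> {x. nxt k (Ds k) x \<noteq> 0}" for k
    by (simp_all add: Ds_def)
  define u where "u k = nxt k (Ds k)" for k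
  have Q: "finite (Ds k) \<and> Q k (Ds k) (u k)" for k
  proof (induction k)
    case 0
    show ?case using someI_ex[OF ex[of "{}" 0, folded Q_def]] by (simp add: Ds0 u_def nxt_def)
  next
    case (Suc k)
    then have f: "finite (Ds (Suc k))" by (simp add: DsS Q_def u_def)
    show ?case using someI_ex[OF ex[OF f, of "Suc k", folded Q_def]] f by (simp add: u_def nxt_def)
  qed
  have Ds_mono: "Ds j \<subseteq> Ds k" if "j \<le> k" for j k
    using that by (induction k rule: dec_induct) (auto simp: DsS)
  have disj: "u j x = 0 \<or> u k x = 0" if "j < k" for j k x
  proof (cases "u j x = 0")
    case False
    then have "x \<in> Ds k" using Ds_mono[of "Suc j" k] that by (auto simp: DsS u_def)
    then show ?thesis using Q[of k] by (simp add: Q_def)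
  qed simp
  show ?thesis
  proof (intro exI conjI allI impI)
    show "P k (u k)" for k using Q[of k] by (simp add: Q_def)
    show "u j x = 0 \<or> u k x = 0" if "j \<noteq> k" for j k x
      using that disj[of j k x] disj[of k j x] by (cases "j < k") auto
  qed
qed

lemma orthogonal_series:
  assumes u: "\<And>k. u k \<in> ell2_on A" "\<And>k. ell2_norm (u k) \<le> 1"
    and orth: "\<And>j k. j \<noteq> k \<Longrightarrow> ell2_inner (u j) (u k) = 0"
  shows "\<exists>v\<in>ell2_on A. \<forall>k. ell2_inner v (u k) = complex_of_real ((1/2)^k * (ell2_norm (u k))^2)"
proof -
  define h :: real where "h = 1/2"
  have ul2: "square_summable (u k)" for k using ell2_on_square_summable[OF u(1)] .
  define s where "s n = (\<lambda>y. \<Sum>j<n. complex_of_real (h^j) * u j y)" for n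
  have sV: "s n \<in> ell2_on A" for n unfolding s_def by (rule ell2_on_sum) (auto intro: u)
  have b0: "(\<lambda>n. 2 * h^n) \<longlonglongrightarrow> 0"
    using tendsto_mult_left[OF LIMSEQ_power_zero[of h], of 2] by (simp add: h_def)
  have cauchy: "ell2_norm (\<lambda>y. s m y - s n y) \<le> 2 * h^n" if "n \<le> m" for n m
  proof -
    have "ell2_norm (\<lambda>y. s m y - s n y) \<le> 2 * (h^n - h^m)"
      using that
    proof (induction m rule: dec_induct)
      case (step m)
      have "(\<lambda>y. s (Suc m) y - s n y) = (\<lambda>y. (s m y - s n y) + complex_of_real (h^m) * u m y)"
        by (simp add: s_def algebra_simps)
      then have "ell2_norm (\<lambda>y. s (Suc m) y - s n y)
          \<le> ell2_norm (\<lambda>y. s m y - s n y) + ell2_norm (\<lambda>y. complex_of_real (h^m) * u m y)"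
        using ell2_add(2) ell2_diff(1) ell2_on_square_summable sV ell2_scale(1) ul2 by metis
      also have "ell2_norm (\<lambda>y. complex_of_real (h^m) * u m y) \<le> h^m"
        using ell2_scale(2)[OF ul2] u(2)[of m] by (simp add: h_def norm_power mult_left_le)
      finally show ?case using step.IH by (simp add: h_def)
    qed simp
    also have "\<dots> \<le> 2 * h^n" by (simp add: h_def)
    finally show ?thesis .
  qed
  obtain v where v: "v \<in> ell2_on A" and vb: "\<And>n. ell2_norm (\<lambda>x. v x - s n x) \<le> 2 * h^n"
    using ell2_on_complete[OF sV b0 cauchy] by blast
  have "ell2_inner v (u k) = complex_of_real (h^k * (ell2_norm (u k))^2)" for k
  proof -
    define ck where "ck = complex_of_real (h^k * (ell2_norm (u k))^2)"
    have sk: "ell2_inner (s n) (u k) = ck" if "k < n" for n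
    proof -
      have "ell2_inner (s n) (u k) = (\<Sum>j<n. complex_of_real (h^j) * ell2_inner (u j) (u k))"
        unfolding s_def
          by (rule ell2_inner_sum_left) (auto intro: ul2 ell2_on_mono[OF subset_UNIV u(1)])
      also have "\<dots> = complex_of_real (h^k) * ell2_inner (u k) (u k)"
        using that by (subst sum.remove[of _ k]) (auto simp: orth intro!: sum.neutral)
      finally show ?thesis using ell2_inner_self[OF ul2] by (simp add: ck_def)
    qed
    have "cmod (ell2_inner v (u k) - ck) \<le> 2 * h^n" if "n \<ge> Suc k" for n
    proof -
      have "ell2_inner v (u k) - ck = ell2_inner (\<lambda>x. v x - s n x) (u k)"
        using sk[of n] that
          ell2_inner_diff_left[OF ell2_on_square_summable[OF v] ell2_on_square_summable[OF sV] ul2]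
            by simp
      also have "cmod \<dots> \<le> ell2_norm (\<lambda>x. v x - s n x) * ell2_norm (u k)"
        by (rule ell2_inner_Cauchy_Schwarz[OF ell2_diff(1) ul2]) (use v sV ell2_on_square_summable in auto)
      also have "\<dots> \<le> 2 * h^n * 1"
        using vb[of n] u(2)[of k] by (intro mult_mono) (auto simp: ell2_norm_nonneg h_def)
      finally show ?thesis by simp
    qed
    then have "cmod (ell2_inner v (u k) - ck) \<le> 0"
      by (intro LIMSEQ_le_const[OF b0]) auto
    then show ?thesis by (simp add: ck_def)
  qed
  then show ?thesis using v by (auto simp: h_def)
qed

text \<open>A hermitian operator whose range has finite codimension cannot have a Weyl sequence that is
  also asymptotically orthogonal to the complement of the range: summing the sequence with weights
  \<open>2^-k\<close> produces a vector that is not in the range plus the complement.\<close>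
lemma no_weyl_sequence_if_finite_cokernel:
  assumes lin: "linear_on UNIV B" and herm: "hermitian_on UNIV B"
    and G: "finite G" "G \<subseteq> ell2_on UNIV"
    and ran: "\<forall>v\<in>ell2_on UNIV. \<exists>w\<in>ell2_on UNIV. \<exists>c. v = (\<lambda>x. B w x + lincomb G c x)"
    and u: "\<And>k. u k \<in> ell2_on UNIV" "\<And>k. 1/2 \<le> ell2_norm (u k)" "\<And>k. ell2_norm (u k) \<le> 1"
    and orth: "\<And>j k. j \<noteq> k \<Longrightarrow> ell2_inner (u j) (u k) = 0"
    and small_B: "\<And>k. ell2_norm (B (u k)) \<le> (1/4)^k"
    and small_G: "\<And>g k. g \<in> G \<Longrightarrow> cmod (ell2_inner g (u k)) \<le> (1/4)^k"
  shows False
proof -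
  have ul2: "square_summable (u k)" for k using ell2_on_square_summable[OF u(1)] .
  obtain v where v: "v \<in> ell2_on UNIV"
    and ipv: "\<And>k. ell2_inner v (u k) = complex_of_real ((1/2)^k * (ell2_norm (u k))^2)"
    using orthogonal_series[of u UNIV, OF u(1) u(3) orth] by blast
  obtain w c where w: "w \<in> ell2_on UNIV" and vw: "v = (\<lambda>x. B w x + lincomb G c x)"
    using ran v by blast
  define M where "M = ell2_norm w + (\<Sum>f\<in>G. cmod (c f))"
  have lcV: "lincomb G c \<in> ell2_on UNIV" unfolding lincomb_def by (rule ell2_on_sum) (use G in auto)
  have BwV: "B w \<in> ell2_on UNIV" by (rule linear_on_ell2_on[OF lin w])
  have bound: "(1/2)^k / 4 \<le> M * (1/4)^k" for k
  proof -
    have "ell2_inner v (u k) = ell2_inner (B w) (u k) + ell2_inner (lincomb G c) (u k)"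
      unfolding vw by (rule ell2_inner_add_left) (use BwV lcV ul2 ell2_on_square_summable in auto)
    also have "ell2_inner (B w) (u k) = ell2_inner w (B (u k))"
      using herm w u(1) unfolding hermitian_on_def by blast
    also have "ell2_inner (lincomb G c) (u k) = (\<Sum>f\<in>G. c f * ell2_inner f (u k))"
      unfolding lincomb_def by (rule ell2_inner_sum_left[OF ul2 G(1)]) (use G in auto)
    finally have e: "ell2_inner v (u k) = ell2_inner w (B (u k)) + (\<Sum>f\<in>G. c f * ell2_inner f (u k))" .
    have a: "cmod (ell2_inner w (B (u k))) \<le> ell2_norm w * (1/4)^k"
      using ell2_inner_Cauchy_Schwarz[OF ell2_on_square_summable[OF w]
          ell2_on_square_summable[OF linear_on_ell2_on[OF lin u(1)]]] small_B[of k]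
      by (meson ell2_norm_nonneg mult_left_mono order_trans)
    have "cmod (\<Sum>f\<in>G. c f * ell2_inner f (u k)) \<le> (\<Sum>f\<in>G. cmod (c f) * (1/4)^k)"
      using small_G
        by (intro order_trans[OF norm_sum] sum_mono) (auto simp: norm_mult intro!: mult_left_mono)
    then have b: "cmod (\<Sum>f\<in>G. c f * ell2_inner f (u k)) \<le> (\<Sum>f\<in>G. cmod (c f)) * (1/4)^k"
      by (simp add: sum_distrib_right)
    have "1/4 \<le> (ell2_norm (u k))^2"
      using power_mono[OF u(2)[of k], of 2] by (simp add: power2_eq_square)
    moreover have "cmod (ell2_inner v (u k)) = (1/2)^k * (ell2_norm (u k))^2"
      unfolding ipv[of k] norm_of_real by simp
    ultimately have "(1/2)^k / 4 \<le> cmod (ell2_inner v (u k))"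
      by simp
    also have "\<dots> \<le> cmod (ell2_inner w (B (u k))) + cmod (\<Sum>f\<in>G. c f * ell2_inner f (u k))"
      unfolding e by (rule norm_triangle_ineq)
    also have "\<dots> \<le> M * (1/4)^k" using a b by (simp add: M_def algebra_simps)
    finally show ?thesis .
  qed
  obtain k :: nat where k: "4 * M < 2^k" using real_arch_pow[of 2 "4 * M"] by auto
  have "(1/2)^k / 4 \<le> M * ((1/2)^k * (1/2)^k)"
    using bound[of k] by (simp add: power_mult_distrib[symmetric])
  then have "2^k \<le> 4 * M" by (simp add: field_simps)
  then show False using k by simp
qed

section \<open>Compressions of a bounded self-adjoint matrix\<close>

locale selfadjoint_matrix =
  fixes H :: "'a \<Rightarrow> 'a \<Rightarrow> complex"
  assumes bounded_H: "bounded_matrix_on UNIV H"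
    and self_adjoint_H: "self_adjoint_on UNIV (mat_op H UNIV)"
begin

abbreviation T :: "('a \<Rightarrow> complex) \<Rightarrow> 'a \<Rightarrow> complex" where "T \<equiv> mat_op H UNIV"

lemma T_apply: "T u = (\<lambda>x. infsum (\<lambda>y. H x y * u y) UNIV)"
  by (simp add: mat_op_def)

lemma row_summable: "(u::'a \<Rightarrow> complex) \<in> ell2_on UNIV \<Longrightarrow> (\<lambda>y. H x y * u y) summable_on UNIV"
  using bounded_H by (simp add: bounded_matrix_on_def)

lemma linear_T: "linear_on UNIV T"
  unfolding linear_on_def
proof (intro conjI ballI allI)
  fix u :: "'a \<Rightarrow> complex" assume u: "u \<in> ell2_on UNIV"
  show "T u \<in> ell2_on UNIV" using bounded_H u by (simp add: bounded_matrix_on_def bounded_on_def)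
  fix c show "T (\<lambda>x. c * u x) = (\<lambda>x. c * T u x)"
    unfolding T_apply
      by (rule ext) (simp add: mult.left_commute infsum_cmult_right row_summable[OF u])
next
  fix u v :: "'a \<Rightarrow> complex" assume u: "u \<in> ell2_on UNIV" and v: "v \<in> ell2_on UNIV"
  show "T (\<lambda>x. u x + v x) = (\<lambda>x. T u x + T v x)"
    unfolding T_apply
      by (rule ext) (simp add: distrib_left infsum_add row_summable[OF u] row_summable[OF v])
qed

definition K :: real where
  "K = max 0 (SOME C. \<forall>u\<in>ell2_on UNIV. ell2_norm (T u) \<le> C * ell2_norm u)"

lemma norm_bounded_T: "norm_bounded_on UNIV T K"
proof -
  define C where "C = (SOME C. \<forall>u\<in>ell2_on UNIV. ell2_norm (T u) \<le> C * ell2_norm u)"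
  have "\<exists>C. \<forall>u\<in>ell2_on UNIV. ell2_norm (T u) \<le> C * ell2_norm u"
    using bounded_H by (simp add: bounded_matrix_on_def bounded_on_def)
  then have C: "\<forall>u\<in>ell2_on UNIV. ell2_norm (T u) \<le> C * ell2_norm u"
    unfolding C_def by (rule someI_ex)
  have "C * ell2_norm u \<le> K * ell2_norm u" for u :: "'a \<Rightarrow> complex"
    unfolding K_def C_def[symmetric] by (rule mult_right_mono[OF max.cobounded2 ell2_norm_nonneg])
  then show ?thesis using C by (auto simp: norm_bounded_on_def K_def intro: order_trans)
qed

lemma K_nonneg: "K \<ge> 0" using norm_bounded_T norm_bounded_on_nonneg by blast

lemma T_hermitian:
  "(u::'a \<Rightarrow> complex) \<in> ell2_on UNIV \<Longrightarrow> v \<in> ell2_on UNIV \<Longrightarrow> ell2_inner (T u) v = ell2_inner u (T v)"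
  using self_adjoint_H by (simp add: self_adjoint_on_def)

lemma T_ell2_on: "u \<in> ell2_on A \<Longrightarrow> T u \<in> ell2_on UNIV"
  by (rule linear_on_ell2_on[OF linear_T ell2_on_mono[OF subset_UNIV]])

lemma mat_op_eq_zero_outside: "u \<in> ell2_on A \<Longrightarrow> mat_op H A u = zero_outside A (T u)"
  unfolding mat_op_def zero_outside_def
  by (rule ext) (auto intro!: infsum_cong_neutral simp: ell2_on_iff)

definition shifted :: "'a set \<Rightarrow> complex \<Rightarrow> ('a \<Rightarrow> complex) \<Rightarrow> 'a \<Rightarrow> complex" where
  "shifted A z u = (\<lambda>x. zero_outside A (T u) x - z * u x)"

lemma shift_op_eq_shifted: "u \<in> ell2_on A \<Longrightarrow> shift_op (mat_op H A) z u = shifted A z u"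
  by (simp add: shift_op_def shifted_def mat_op_eq_zero_outside)

lemma shift_op_UNIV_eq_shifted: "shift_op T z u = shifted UNIV z u"
  by (simp add: shift_op_def shifted_def zero_outside_def)

lemma linear_shifted: "linear_on A (shifted A z)"
  unfolding linear_on_def
proof (intro conjI ballI allI)
  fix u assume u: "u \<in> ell2_on A"
  have uU: "u \<in> ell2_on UNIV" using ell2_on_mono[OF subset_UNIV u] .
  show "shifted A z u \<in> ell2_on A" unfolding shifted_def
    by (intro ell2_on_diff ell2_on_scale u zero_outside_ell2(1) ell2_on_square_summable[OF T_ell2_on[OF u]])
  fix c show "shifted A z (\<lambda>x. c * u x) = (\<lambda>x. c * shifted A z u x)"
    unfolding shifted_def linear_on_scale[OF linear_T uU]
      by (auto simp: zero_outside_def algebra_simps)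
next
  fix u v assume u: "u \<in> ell2_on A" and v: "v \<in> ell2_on A"
  have uU: "u \<in> ell2_on UNIV" "v \<in> ell2_on UNIV"
    using ell2_on_mono[OF subset_UNIV u] ell2_on_mono[OF subset_UNIV v] by auto
  show "shifted A z (\<lambda>x. u x + v x) = (\<lambda>x. shifted A z u x + shifted A z v x)"
    unfolding shifted_def linear_on_add[OF linear_T uU]
      by (auto simp: zero_outside_def algebra_simps)
qed

lemma norm_bounded_shifted: "norm_bounded_on A (shifted A z) (K + cmod z)"
  unfolding norm_bounded_on_def
proof (intro conjI ballI)
  show "K + cmod z \<ge> 0" using K_nonneg by simp
  fix u assume u: "u \<in> ell2_on A"
  have uU: "u \<in> ell2_on UNIV" using ell2_on_mono[OF subset_UNIV u] .
  have l: "square_summable (zero_outside A (T u))" "square_summable (\<lambda>x. z * u x)"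
    "square_summable u" "square_summable (T u)"
    using zero_outside_ell2(1) ell2_on_square_summable T_ell2_on[OF u] u ell2_scale by blast+
  have "ell2_norm (shifted A z u) \<le> ell2_norm (zero_outside A (T u)) + ell2_norm (\<lambda>x. z * u x)"
    unfolding shifted_def by (rule ell2_diff(2)[OF l(1,2)])
  also have "\<dots> \<le> K * ell2_norm u + cmod z * ell2_norm u"
    using zero_outside_ell2(2)[OF l(4), of A] norm_bounded_onD[OF norm_bounded_T uU]
      ell2_scale(2)[OF l(3), of z]
    by linarith
  finally show "ell2_norm (shifted A z u) \<le> (K + cmod z) * ell2_norm u" by (simp add: algebra_simps)
qed

lemma ell2_inner_zero_outside_T:
  "u \<in> ell2_on A \<Longrightarrow> ell2_inner (zero_outside A (T u)) u = ell2_inner (T u) u"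
  by (simp add: ell2_inner_zero_outside zero_outside_id)

lemma hermitian_shifted: "hermitian_on A (shifted A (complex_of_real r))"
  unfolding hermitian_on_def
proof (intro ballI)
  fix u v assume u: "u \<in> ell2_on A" and v: "v \<in> ell2_on A"
  have uU: "u \<in> ell2_on UNIV" "v \<in> ell2_on UNIV"
    using ell2_on_mono[OF subset_UNIV u] ell2_on_mono[OF subset_UNIV v] by auto
  have l: "square_summable (zero_outside A (T u))" "square_summable (zero_outside A (T v))"
    "square_summable u" "square_summable v"
    using zero_outside_ell2(1) ell2_on_square_summable T_ell2_on u v by blast+
  have a: "ell2_inner (zero_outside A (T u)) v = ell2_inner u (zero_outside A (T v))"
    using ell2_inner_zero_outside[of A "T u" v] ell2_inner_zero_outside[of A u "T v"]
      zero_outside_id[OF u] zero_outside_id[OF v] T_hermitian[OF uU]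
    by simp
  show "ell2_inner (shifted A (complex_of_real r) u) v = ell2_inner u (shifted A (complex_of_real r) v)"
    unfolding shifted_def using l a
      by (simp add: ell2_inner_diff_left ell2_inner_diff_right ell2_inner_scale_left
          ell2_inner_scale_right ell2_scale)
qed

definition qform :: "('a \<Rightarrow> complex) \<Rightarrow> real" where "qform u = Re (ell2_inner (T u) u)"

lemma Re_ell2_inner_shifted:
  "u \<in> ell2_on A \<Longrightarrow> Re (ell2_inner (shifted A (complex_of_real t) u) u) = qform u - t * (ell2_norm u)^2"
proof -
  assume u: "u \<in> ell2_on A"
  have l: "square_summable (zero_outside A (T u))" "square_summable u"
    using zero_outside_ell2(1) ell2_on_square_summable T_ell2_on[OF u] u by blast+
  have "ell2_inner (shifted A (complex_of_real t) u) u
      = ell2_inner (zero_outside A (T u)) u - complex_of_real t * ell2_inner u u"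
    unfolding shifted_def using l
      by (simp add: ell2_inner_diff_left ell2_inner_scale_left ell2_scale)
  then show ?thesis using ell2_inner_zero_outside_T[OF u] ell2_inner_self[OF l(2)]
    by (simp add: qform_def)
qed

definition form_inf :: "'a set \<Rightarrow> real" where
  "form_inf A = Inf (qform ` {u \<in> ell2_on A. ell2_norm u = 1})"

lemma abs_qform_le: "u \<in> ell2_on A \<Longrightarrow> \<bar>qform u\<bar> \<le> K * (ell2_norm u)^2"
proof -
  assume u: "u \<in> ell2_on A"
  have uU: "u \<in> ell2_on UNIV" using ell2_on_mono[OF subset_UNIV u] .
  have "\<bar>qform u\<bar> \<le> cmod (ell2_inner (T u) u)" unfolding qform_def by (rule abs_Re_le_cmod)
  also have "\<dots> \<le> ell2_norm (T u) * ell2_norm u"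
    using ell2_inner_Cauchy_Schwarz ell2_on_square_summable T_ell2_on[OF u] u by blast
  also have "\<dots> \<le> K * ell2_norm u * ell2_norm u"
    using norm_bounded_onD[OF norm_bounded_T uU] by (simp add: mult_right_mono ell2_norm_nonneg)
  finally show ?thesis by (simp add: power2_eq_square mult.assoc)
qed

lemma qform_scale: "u \<in> ell2_on A \<Longrightarrow> qform (\<lambda>x. complex_of_real r * u x) = r^2 * qform u"
proof -
  assume u: "u \<in> ell2_on A"
  have uU: "u \<in> ell2_on UNIV" using ell2_on_mono[OF subset_UNIV u] .
  have l: "square_summable u" "square_summable (T u)" using ell2_on_square_summable T_ell2_on u
    by blast+
  show ?thesis unfolding qform_def linear_on_scale[OF linear_T uU] using l
    by (simp add: ell2_inner_scale_left ell2_inner_scale_right ell2_scale power2_eq_square)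
qed

lemma unit_sphere_nonempty: "(A::'a set) \<noteq> {} \<Longrightarrow> {u \<in> ell2_on A. ell2_norm u = 1} \<noteq> {}"
proof -
  assume "A \<noteq> {}"
  then obtain a where a: "a \<in> A" by blast
  then have "unit_vec a \<in> {u \<in> ell2_on A. ell2_norm u = 1}"
    using unit_vec_ell2_on[OF a] ell2_norm_unit_vec by simp
  then show ?thesis by blast
qed

lemma bdd_below_qform: "bdd_below (qform ` {u \<in> ell2_on A. ell2_norm u = 1})"
proof (rule bdd_belowI2)
  fix u assume "u \<in> {u \<in> ell2_on A. ell2_norm u = 1}"
  then show "- K \<le> qform u" using abs_qform_le[of u A] by auto
qed

lemma form_inf_le_qform: "u \<in> ell2_on A \<Longrightarrow> ell2_norm u = 1 \<Longrightarrow> form_inf A \<le> qform u"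
  unfolding form_inf_def by (rule cInf_lower) (auto intro: bdd_below_qform)

lemma form_inf_le: "A \<noteq> {} \<Longrightarrow> form_inf A \<le> K"
proof -
  assume "A \<noteq> {}"
  then obtain a where a: "a \<in> A" by blast
  have "form_inf A \<le> qform (unit_vec a)"
    by (rule form_inf_le_qform[OF unit_vec_ell2_on[OF a] ell2_norm_unit_vec])
  also have "\<dots> \<le> K" using abs_qform_le[OF unit_vec_ell2_on[OF a]]
    by (simp add: ell2_norm_unit_vec abs_le_iff)
  finally show ?thesis .
qed

lemma form_inf_approx: "A \<noteq> {} \<Longrightarrow> e > 0 \<Longrightarrow> \<exists>u\<in>ell2_on A. ell2_norm u = 1 \<and> qform u < form_inf A + e"
proof -
  assume A: "A \<noteq> {}" and e: "e > 0"
  have ne: "qform ` {u \<in> ell2_on A. ell2_norm u = 1} \<noteq> {}" using unit_sphere_nonempty[OF A] by blast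
  have "\<exists>y\<in>qform ` {u \<in> ell2_on A. ell2_norm u = 1}. y < form_inf A + e"
    using cInf_lessD[OF ne, of "form_inf A + e"] e unfolding form_inf_def by simp
  then show ?thesis by auto
qed

lemma form_inf_mult_le_qform: "u \<in> ell2_on A \<Longrightarrow> qform u \<ge> form_inf A * (ell2_norm u)^2"
proof (cases "ell2_norm u = 0")
  case True
  assume u: "u \<in> ell2_on A"
  then have "u = (\<lambda>x. 0)" using ell2_norm_eq_0D ell2_on_square_summable True by blast
  then have "qform u = 0" using linear_on_scale[OF linear_T ell2_on_zero, of 0]
    by (simp add: qform_def ell2_inner_def)
  then show ?thesis using True by simp
next
  case False
  assume u: "u \<in> ell2_on A"
  define n where "n = ell2_norm u"
  have np: "n > 0" using False ell2_norm_nonneg[of u] n_def by linarith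
  define w where "w = (\<lambda>x. complex_of_real (1/n) * u x)"
  have w: "w \<in> ell2_on A" unfolding w_def using ell2_on_scale[OF u] .
  have "ell2_norm w = cmod (complex_of_real (1/n)) * ell2_norm u"
    unfolding w_def by (rule ell2_scale(2)[OF ell2_on_square_summable[OF u]])
  then have wn: "ell2_norm w = 1" using np n_def by (simp add: norm_divide)
  have "form_inf A \<le> qform w" by (rule form_inf_le_qform[OF w wn])
  also have "\<dots> = qform u / n^2" unfolding w_def qform_scale[OF u] by (simp add: power2_eq_square)
  finally show ?thesis using np by (simp add: n_def field_simps)
qed

lemma form_inf_mono:
  assumes "A \<noteq> {}" "A \<subseteq> A'"
  shows "form_inf A' \<le> form_inf A"
  unfolding form_inf_def
proof (rule cInf_superset_mono)
  show "qform ` {u \<in> ell2_on A. ell2_norm u = 1} \<noteq> {}" using unit_sphere_nonempty[OF assms(1)]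
    by blast
  show "qform ` {u \<in> ell2_on A. ell2_norm u = 1} \<subseteq> qform ` {u \<in> ell2_on A'. ell2_norm u = 1}"
    using ell2_on_mono[OF assms(2)] by blast
qed (rule bdd_below_qform)

lemma shifted_norm_power2_le:
  assumes u: "u \<in> ell2_on A" and m: "m \<le> form_inf A"
  shows "(ell2_norm (shifted A (complex_of_real m) u))^2 \<le> (K + \<bar>m\<bar>) * (qform u - m * (ell2_norm u)^2)"
proof -
  have "Re (ell2_inner (shifted A (complex_of_real m) w) w) \<ge> 0" if w: "w \<in> ell2_on A" for w
    unfolding Re_ell2_inner_shifted[OF w] using form_inf_mult_le_qform[OF w] m
    by (smt (verit) mult_right_mono zero_le_power2)
  from nonneg_hermitian_norm_power2_le[OF linear_shifted norm_bounded_shifted hermitian_shifted this u]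
  show ?thesis unfolding Re_ell2_inner_shifted[OF u] by simp
qed

text \<open>Vectors supported far away from a finite set \<open>F\<close> are mapped to vectors that are small on \<open>F\<close>,
  since \<open>(T u) x = \<langle>u, T e\<^sub>x\<rangle>\<close> and \<open>T e\<^sub>x\<close> has small tails.\<close>
lemma T_small_on_finite_set:
  assumes F: "finite F" and \<eta>: "\<eta> > 0"
  shows "\<exists>E. finite E \<and> (\<forall>u\<in>ell2_on (- E). ell2_norm (zero_outside F (T u)) \<le> \<eta> * ell2_norm u)"
proof -
  define n where "n = card F"
  have "\<forall>x\<in>F. \<exists>E. finite E \<and> ell2_norm (zero_outside (- E) (T (unit_vec x))) \<le> \<eta> / (n + 1)"
    using ell2_tail_small[OF ell2_on_square_summable[OF T_ell2_on[OF unit_vec_ell2_UNIV]]] \<eta>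
    by simp
  then obtain E where E: "\<And>x. x \<in> F \<Longrightarrow> finite (E x) \<and>
      ell2_norm (zero_outside (- E x) (T (unit_vec x))) \<le> \<eta> / (n + 1)"
    by metis
  have "ell2_norm (zero_outside F (T u)) \<le> \<eta> * ell2_norm u"
    if u: "u \<in> ell2_on (- (\<Union>x\<in>F. E x))" for u
  proof -
    have uU: "u \<in> ell2_on UNIV" by (rule ell2_on_mono[OF subset_UNIV u])
    have pt: "cmod (T u x) \<le> \<eta> / (n + 1) * ell2_norm u" if x: "x \<in> F" for x
    proof -
      define r where "r = zero_outside (- E x) (T (unit_vec x))"
      have r: "square_summable r"
        unfolding r_def by (intro zero_outside_ell2(1)[THEN ell2_on_square_summable]
            ell2_on_square_summable[OF T_ell2_on[OF unit_vec_ell2_UNIV]])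
      have "T u x = ell2_inner (T u) (unit_vec x)" by (simp add: ell2_inner_unit_vec)
      also have "\<dots> = ell2_inner u (T (unit_vec x))" by (rule T_hermitian[OF uU unit_vec_ell2_UNIV])
      also have "\<dots> = ell2_inner u r"
        unfolding r_def
          by (rule ell2_inner_zero_outside_right) (use ell2_on_outside[OF u] x in auto)
      finally have "cmod (T u x) \<le> ell2_norm u * ell2_norm r"
        using ell2_inner_Cauchy_Schwarz[OF ell2_on_square_summable[OF uU] r] by simp
      also have "\<dots> \<le> ell2_norm u * (\<eta> / (n + 1))"
        using E[OF x] by (intro mult_left_mono) (auto simp: r_def ell2_norm_nonneg)
      finally show ?thesis by (simp add: mult.commute)
    qed
    have "ell2_norm (zero_outside F (T u)) \<le> (\<Sum>x\<in>F. cmod (T u x))"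
      by (rule ell2_norm_zero_outside_le_sum[OF F])
    also have "\<dots> \<le> (\<Sum>x\<in>F. \<eta> / (n + 1) * ell2_norm u)" by (rule sum_mono) (rule pt)
    also have "\<dots> = n * (\<eta> / (n + 1) * ell2_norm u)" by (simp add: n_def)
    also have "\<dots> \<le> \<eta> * ell2_norm u"
      using \<eta> ell2_norm_nonneg[of u] by (simp add: field_simps mult_left_mono)
    finally show ?thesis .
  qed
  then show ?thesis using F E by (intro exI[of _ "\<Union>x\<in>F. E x"]) auto
qed

lemma real_spectrum_iff:
  "t \<in> real_points (spectrum_on A (mat_op H A)) \<longleftrightarrow> \<not> invertible_on A (shifted A (complex_of_real t))"
  unfolding real_points_def spectrum_on_def
    using invertible_on_cong[of A "shift_op (mat_op H A) (complex_of_real t)" "shifted A (complex_of_real t)"]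
      shift_op_eq_shifted
  by auto

lemma invertible_below_form_inf:
  assumes "t < form_inf A"
  shows "invertible_on A (shifted A (complex_of_real t))"
proof (rule coercive_invertible[OF linear_shifted norm_bounded_shifted])
  show "form_inf A - t > 0" using assms by simp
  fix u assume u: "u \<in> ell2_on A"
  show "(form_inf A - t) * (ell2_norm u)^2 \<le> Re (ell2_inner (shifted A (complex_of_real t) u) u)"
    unfolding Re_ell2_inner_shifted[OF u] using form_inf_mult_le_qform[OF u]
      by (simp add: algebra_simps)
qed

lemma form_inf_not_invertible:
  assumes A: "A \<noteq> {}"
  shows "\<not> invertible_on A (shifted A (complex_of_real (form_inf A)))"
proof (rule approx_kernel_not_invertible[OF linear_shifted])
  fix e :: real assume e: "e > 0"
  define L where "L = K + \<bar>form_inf A\<bar>"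
  have L: "L \<ge> 0" using K_nonneg by (simp add: L_def)
  obtain u where u: "u \<in> ell2_on A" "ell2_norm u = 1" "qform u < form_inf A + e^2 / (L + 1)"
    using form_inf_approx[OF A, of "e^2 / (L + 1)"] e L by auto
  have "(ell2_norm (shifted A (complex_of_real (form_inf A)) u))^2 \<le> L * (qform u - form_inf A)"
    using shifted_norm_power2_le[OF u(1) order_refl] u(2) by (simp add: L_def)
  also have "\<dots> \<le> L * (e^2 / (L + 1))" using u(3) L by (intro mult_left_mono) auto
  also have "\<dots> < e^2" using L e by (simp add: field_simps)
  finally have "ell2_norm (shifted A (complex_of_real (form_inf A)) u) < e"
    using e by (simp add: power_less_imp_less_base)
  then show "\<exists>u\<in>ell2_on A. ell2_norm u = 1 \<and> ell2_norm (shifted A (complex_of_real (form_inf A)) u) < e"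
    using u by blast
qed

lemma Inf_spectrum_compression:
  assumes A: "A \<noteq> {}"
  shows "Inf (real_points (spectrum_on A (mat_op H A))) = form_inf A"
proof (rule cInf_eq_minimum)
  show "form_inf A \<in> real_points (spectrum_on A (mat_op H A))"
    using real_spectrum_iff form_inf_not_invertible[OF A] by blast
  fix t assume "t \<in> real_points (spectrum_on A (mat_op H A))"
  then show "form_inf A \<le> t" using real_spectrum_iff invertible_below_form_inf by (meson not_le)
qed

text \<open>On \<open>A1\<close> the residual is controlled through the nonnegative operator obtained by shifting the
  compression by \<open>m - \<eta>\<close>; off \<open>A1\<close> it is the part of \<open>T u\<close> outside \<open>A1\<close>.\<close>
lemma shifted_residual_le:
  assumes low: "m - \<eta> \<le> form_inf A1" and \<eta>: "0 < \<eta>" "\<eta> \<le> 1"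
    and u0: "u0 \<in> ell2_on A1" "ell2_norm u0 = 1" "qform u0 \<le> m + \<eta>"
    and u: "u \<in> ell2_on A1" "ell2_norm u \<le> 1"
  shows "ell2_norm (shifted UNIV (complex_of_real m) u)
    \<le> sqrt ((K + \<bar>m\<bar> + 1) * (2 * \<eta>)) + (K + \<bar>m\<bar> + 1) * ell2_norm (\<lambda>x. u0 x - u x) + \<eta>
      + ell2_norm (zero_outside (- A1) (T u))"
proof -
  define L where "L = K + \<bar>m\<bar> + 1"
  define \<Sigma> where "\<Sigma> = shifted A1 (complex_of_real (m - \<eta>))"
  have K1: "K + \<bar>m - \<eta>\<bar> \<le> L" using \<eta> unfolding L_def by linarith
  have "qform u0 - (m - \<eta>) \<ge> 0" using form_inf_le_qform[OF u0(1,2)] low by simp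
  have "(ell2_norm (\<Sigma> u0))^2 \<le> (K + \<bar>m - \<eta>\<bar>) * (qform u0 - (m - \<eta>))"
    using shifted_norm_power2_le[OF u0(1) low] u0(2) by (simp add: \<Sigma>_def)
  also have "\<dots> \<le> L * (2 * \<eta>)"
    using K1 u0(3) \<open>qform u0 - (m - \<eta>) \<ge> 0\<close> K_nonneg by (intro mult_mono) auto
  finally have \<Sigma>u0: "ell2_norm (\<Sigma> u0) \<le> sqrt (L * (2 * \<eta>))"
    by (simp add: real_le_rsqrt)
  have "ell2_norm (\<Sigma> u) \<le> ell2_norm (\<Sigma> u0) + (K + \<bar>m - \<eta>\<bar>) * ell2_norm (\<lambda>x. u0 x - u x)"
    using norm_bounded_on_lipschitz[OF linear_shifted norm_bounded_shifted u0(1) u(1),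
        of "complex_of_real (m - \<eta>)"]
    unfolding \<Sigma>_def norm_of_real .
  also have "\<dots> \<le> sqrt (L * (2 * \<eta>)) + L * ell2_norm (\<lambda>x. u0 x - u x)"
    using \<Sigma>u0 K1 by (intro add_mono mult_right_mono) (auto simp: ell2_norm_nonneg)
  finally have \<Sigma>u: "ell2_norm (\<Sigma> u) \<le> sqrt (L * (2 * \<eta>)) + L * ell2_norm (\<lambda>x. u0 x - u x)" .
  define r where "r = zero_outside (- A1) (T u)"
  have l2: "square_summable (\<Sigma> u)" "square_summable (\<lambda>x. complex_of_real \<eta> * u x)" "square_summable r"
    using ell2_on_square_summable linear_on_ell2_on[OF linear_shifted u(1)] ell2_scale(1)
      zero_outside_ell2(1) T_ell2_on u(1) unfolding \<Sigma>_def r_def by blast+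
  have "shifted UNIV (complex_of_real m) u = (\<lambda>x. (\<Sigma> u x - complex_of_real \<eta> * u x) + r x)"
    using ell2_on_outside[OF u(1)]
      by (auto simp: \<Sigma>_def r_def shifted_def zero_outside_def algebra_simps)
  then have "ell2_norm (shifted UNIV (complex_of_real m) u)
      \<le> ell2_norm (\<Sigma> u) + ell2_norm (\<lambda>x. complex_of_real \<eta> * u x) + ell2_norm r"
    using ell2_add(2)[OF ell2_diff(1)[OF l2(1,2)] l2(3)] ell2_diff(2)[OF l2(1,2)] by simp
  moreover have "ell2_norm (\<lambda>x. complex_of_real \<eta> * u x) \<le> \<eta>"
    using ell2_scale(2)[OF ell2_on_square_summable[OF u(1)]] u(2) \<eta>(1) by (simp add: mult_left_le)
  ultimately show ?thesis using \<Sigma>u unfolding L_def r_def by linarith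
qed

lemma fredholm_below_form_inf:
  assumes A: "finite (- A)" and t: "t < form_inf A"
  shows "fredholm_on UNIV (shifted UNIV (complex_of_real t))"
proof (rule fredholm_if_compression_invertible[OF linear_shifted A])
  have "shifted A (complex_of_real t) u = zero_outside A (shifted UNIV (complex_of_real t) u)"
    if "u \<in> ell2_on A" for u
    using ell2_on_outside[OF that] by (auto simp: shifted_def zero_outside_def)
  from invertible_on_cong_imp[OF this invertible_below_form_inf[OF t]]
  show "invertible_on A (\<lambda>u. zero_outside A (shifted UNIV (complex_of_real t) u))" .
qed

end


section \<open>The bottom of the essential spectrum\<close>

locale selfadjoint_matrix_infinite = selfadjoint_matrix +
  assumes infinite_index: "infinite (UNIV :: 'a set)"
begin

definition ess_bottom :: real where
  "ess_bottom = Sup (form_inf ` {A. finite (- A)})"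

lemma cofinite_nonempty: "finite (- (A::'a set)) \<Longrightarrow> A \<noteq> {}"
  using infinite_index by auto

lemma bdd_above_form_inf_cofinite: "bdd_above (form_inf ` {A. finite (- A)})"
  using form_inf_le cofinite_nonempty by (intro bdd_aboveI2[of _ _ K]) auto

lemma form_inf_le_ess_bottom: "finite (- A) \<Longrightarrow> form_inf A \<le> ess_bottom"
  unfolding ess_bottom_def by (rule cSup_upper[OF _ bdd_above_form_inf_cofinite]) simp

lemma ess_bottom_approx:
  assumes "e > 0"
  shows "\<exists>A. finite (- A) \<and> ess_bottom - e < form_inf A"
proof -
  have "UNIV \<in> {A :: 'a set. finite (- A)}" by simp
  then have "form_inf ` {A. finite (- A)} \<noteq> {}" by blast
  from less_cSup_iff[OF this bdd_above_form_inf_cofinite, of "ess_bottom - e"]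
  show ?thesis using assms by (auto simp: ess_bottom_def)
qed

text \<open>A Weyl vector for \<open>ess_bottom\<close>: an almost minimising unit vector for the compression to a
  cofinite set that avoids \<open>D\<close>, the tails of \<open>G\<close>, and the region where \<open>T\<close> couples to the
  complement of a slightly larger cofinite set \<open>A1\<close>, truncated to finite support.\<close>
lemma weyl_vector:
  assumes e: "\<epsilon> > 0" and D: "finite D" and G: "finite G" "G \<subseteq> ell2_on UNIV"
  shows "\<exists>u\<in>ell2_on UNIV. finite {x. u x \<noteq> 0} \<and> (\<forall>x\<in>D. u x = 0) \<and>
           1/2 \<le> ell2_norm u \<and> ell2_norm u \<le> 1 \<and>
           ell2_norm (shifted UNIV (complex_of_real ess_bottom) u) \<le> \<epsilon> \<and>
           (\<forall>g\<in>G. cmod (ell2_inner g u) \<le> \<epsilon>)"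
proof -
  define L where "L = K + \<bar>ess_bottom\<bar> + 1"
  have L: "L \<ge> 1" using K_nonneg by (simp add: L_def)
  define \<eta> where "\<eta> = min 1 (min (\<epsilon>/6) (\<epsilon>^2 / (18 * L)))"
  have \<eta>: "\<eta> > 0" "\<eta> \<le> 1" "\<eta> \<le> \<epsilon>/6" "\<eta> \<le> \<epsilon>^2 / (18 * L)"
    using e L by (auto simp: \<eta>_def)
  have "L * (2 * \<eta>) \<le> L * (2 * (\<epsilon>^2 / (18 * L)))" using \<eta>(4) L by (intro mult_left_mono) auto
  then have \<eta>L: "L * (2 * \<eta>) \<le> (\<epsilon>/3)^2" using L by (simp add: power2_eq_square)
  define \<delta> where "\<delta> = min (1/2) (\<epsilon> / (3 * L))"
  have \<delta>: "\<delta> > 0" "\<delta> \<le> 1/2" "\<delta> \<le> \<epsilon> / (3 * L)" using e L by (auto simp: \<delta>_def)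
  have \<delta>L: "L * \<delta> \<le> \<epsilon>/3"
    using mult_left_mono[OF \<delta>(3), of L] L by simp
  obtain A0 where A0: "finite (- A0)" "ess_bottom - \<eta> < form_inf A0"
    using ess_bottom_approx[OF \<eta>(1)] by blast
  obtain EG where EG: "finite EG" "\<And>u g. u \<in> ell2_on (- EG) \<Longrightarrow> g \<in> G \<Longrightarrow>
      cmod (ell2_inner g u) \<le> \<epsilon> * ell2_norm u"
    using almost_orthogonal_off_finite_set[OF G e] by blast
  define A1 where "A1 = A0 - D - EG"
  have A1: "finite (- A1)" using A0(1) D EG(1) by (simp add: A1_def Compl_Diff_eq)
  obtain EF where EF: "finite EF" "\<And>u. u \<in> ell2_on (- EF) \<Longrightarrow>
      ell2_norm (zero_outside (- A1) (T u)) \<le> \<eta> * ell2_norm u"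
    using T_small_on_finite_set[OF A1 \<eta>(1)] by blast
  define A where "A = A1 - EF"
  have A: "finite (- A)" using A1 EF(1) by (simp add: A_def Compl_Diff_eq)
  have sub: "A \<subseteq> A1" "A \<subseteq> - EF" "A1 \<subseteq> A0" "A \<subseteq> - D" "A \<subseteq> - EG"
    by (auto simp: A_def A1_def)
  obtain u0 where u0: "u0 \<in> ell2_on A" "ell2_norm u0 = 1" "qform u0 < form_inf A + \<eta>"
    using form_inf_approx[OF cofinite_nonempty[OF A] \<eta>(1)] by blast
  obtain u where u: "u \<in> ell2_on A" "finite {x. u x \<noteq> 0}" "ell2_norm (\<lambda>x. u0 x - u x) \<le> \<delta>"
      "ell2_norm u \<le> 1"
    using finite_support_approx[OF u0(1) \<delta>(1)] u0(2) by auto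
  have "1 \<le> ell2_norm u + ell2_norm (\<lambda>x. u0 x - u x)"
    using ell2_add(2)[OF ell2_on_square_summable[OF u(1)]
        ell2_diff(1)[OF ell2_on_square_summable[OF u0(1)] ell2_on_square_summable[OF u(1)]]] u0(2)
    by simp
  then have u_ge: "1/2 \<le> ell2_norm u" using u(3) \<delta>(2) by linarith
  have "ell2_norm (shifted UNIV (complex_of_real ess_bottom) u)
      \<le> sqrt (L * (2 * \<eta>)) + L * ell2_norm (\<lambda>x. u0 x - u x) + \<eta> + ell2_norm (zero_outside (- A1) (T u))"
    unfolding L_def
  proof (rule shifted_residual_le[OF _ \<eta>(1,2) _ u0(2) _ _ u(4)])
    show "ess_bottom - \<eta> \<le> form_inf A1"
      using form_inf_mono[OF cofinite_nonempty[OF A1] sub(3)] A0(2) by simp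
    show "qform u0 \<le> ess_bottom + \<eta>" using u0(3) form_inf_le_ess_bottom[OF A] by simp
  qed (use ell2_on_mono sub(1) u0(1) u(1) in blast)+
  also have "\<dots> \<le> \<epsilon>/3 + \<epsilon>/3 + \<epsilon>/6 + \<epsilon>/6"
  proof (intro add_mono)
    show "sqrt (L * (2 * \<eta>)) \<le> \<epsilon>/3" using real_sqrt_le_mono[OF \<eta>L] e by simp
    show "L * ell2_norm (\<lambda>x. u0 x - u x) \<le> \<epsilon>/3" using mult_left_mono[OF u(3), of L] \<delta>L L by linarith
    show "ell2_norm (zero_outside (- A1) (T u)) \<le> \<epsilon>/6"
      using EF(2)[OF ell2_on_mono[OF sub(2) u(1)]] mult_left_le[OF u(4), of \<eta>] \<eta>(1,3) by linarith
  qed (use \<eta>(3) in simp)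
  finally have res: "ell2_norm (shifted UNIV (complex_of_real ess_bottom) u) \<le> \<epsilon>" by simp
  have "cmod (ell2_inner g u) \<le> \<epsilon>" if "g \<in> G" for g
  proof -
    have "cmod (ell2_inner g u) \<le> \<epsilon> * ell2_norm u"
      using EG(2)[OF ell2_on_mono[OF sub(5) u(1)] that] .
    also have "\<dots> \<le> \<epsilon>" using u(4) e by (simp add: mult_left_le)
    finally show ?thesis .
  qed
  then show ?thesis
    using ell2_on_mono[OF subset_UNIV u(1)] u(2,4) u_ge res ell2_on_outside[OF u(1)] sub(4)
    by (intro bexI[of _ u]) auto
qed

lemma ess_bottom_not_fredholm: "\<not> fredholm_on UNIV (shifted UNIV (complex_of_real ess_bottom))"
proof
  define B where "B = shifted UNIV (complex_of_real ess_bottom)"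
  assume "fredholm_on UNIV (shifted UNIV (complex_of_real ess_bottom))"
  then obtain G where G: "finite G" "G \<subseteq> ell2_on UNIV"
    and ran: "\<forall>v\<in>ell2_on UNIV. \<exists>w\<in>ell2_on UNIV. \<exists>c. v = (\<lambda>x. B w x + lincomb G c x)"
    unfolding fredholm_on_def B_def by blast
  define P where "P k u \<longleftrightarrow> u \<in> ell2_on UNIV \<and> 1/2 \<le> ell2_norm u \<and> ell2_norm u \<le> 1 \<and>
      ell2_norm (B u) \<le> (1/4::real)^k \<and> (\<forall>g\<in>G. cmod (ell2_inner g u) \<le> (1/4::real)^k)" for k u
  have ex: "\<exists>u. finite {x. u x \<noteq> 0} \<and> (\<forall>x\<in>D. u x = 0) \<and> P k u" if D: "finite D" for k D
  proof -
    obtain u where "u \<in> ell2_on UNIV" "finite {x. u x \<noteq> 0}" "\<forall>x\<in>D. u x = 0"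
      "1/2 \<le> ell2_norm u" "ell2_norm u \<le> 1" "ell2_norm (B u) \<le> (1/4)^k"
      "\<forall>g\<in>G. cmod (ell2_inner g u) \<le> (1/4)^k"
      using weyl_vector[OF _ D G, of "(1/4)^k"] unfolding B_def by auto
    then show ?thesis unfolding P_def by blast
  qed
  obtain u where u: "\<And>k. P k (u k)" and disj: "\<And>j k x. j \<noteq> k \<Longrightarrow> u j x = 0 \<or> u k x = 0"
    using disjoint_supports_sequence[of P, OF ex] by blast
  show False
  proof (rule no_weyl_sequence_if_finite_cokernel[OF linear_shifted hermitian_shifted G ran[unfolded B_def]])
    show "u k \<in> ell2_on UNIV" "1/2 \<le> ell2_norm (u k)" "ell2_norm (u k) \<le> 1"
      "ell2_norm (shifted UNIV (complex_of_real ess_bottom) (u k)) \<le> (1/4)^k" for k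
      using u[of k] by (simp_all add: P_def B_def)
    show "cmod (ell2_inner g (u k)) \<le> (1/4)^k" if "g \<in> G" for g k
      using u[of k] that by (simp add: P_def)
    show "ell2_inner (u j) (u k) = 0" if "j \<noteq> k" for j k
      by (rule ell2_inner_disjoint_supports) (use disj[OF that] in blast)
  qed
qed

lemma real_ess_spectrum_iff:
  "t \<in> real_points (ess_spectrum_on UNIV T) \<longleftrightarrow> \<not> fredholm_on UNIV (shifted UNIV (complex_of_real t))"
  by (simp add: real_points_def ess_spectrum_on_def shift_op_UNIV_eq_shifted[abs_def])

lemma Inf_ess_spectrum_eq_ess_bottom: "Inf (real_points (ess_spectrum_on UNIV T)) = ess_bottom"
proof (rule cInf_eq_minimum)
  show "ess_bottom \<in> real_points (ess_spectrum_on UNIV T)"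
    using real_ess_spectrum_iff ess_bottom_not_fredholm by blast
  fix t assume t: "t \<in> real_points (ess_spectrum_on UNIV T)"
  show "ess_bottom \<le> t"
  proof (rule ccontr)
    assume "\<not> ess_bottom \<le> t"
    then obtain A where "finite (- A)" "t < form_inf A"
      using ess_bottom_approx[of "ess_bottom - t"] by auto
    then show False using fredholm_below_form_inf t real_ess_spectrum_iff by blast
  qed
qed

lemma Inf_ess_spectrum:
  "Inf (real_points (ess_spectrum_on UNIV T)) =
     Sup ((\<lambda>M0. Inf (real_points (spectrum_on M0 (mat_op H M0)))) ` {M0. finite (- M0)})"
  unfolding Inf_ess_spectrum_eq_ess_bottom ess_bottom_def
  using Inf_spectrum_compression[OF cofinite_nonempty]
    by (intro arg_cong[where f = Sup] image_cong) auto

end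

section \<open>The top of the essential spectrum\<close>

lemma Sup_eq_uminus_Inf: "Sup (S::real set) = - Inf (uminus ` S)"
  by (simp add: Inf_real_def image_image)

lemma invertible_on_uminus_imp:
  assumes "invertible_on A B"
  shows "invertible_on A (\<lambda>u x. - B u x)"
proof -
  obtain S C where SV: "\<And>u. u \<in> ell2_on A \<Longrightarrow> S u \<in> ell2_on A"
    and Sb: "\<And>u. u \<in> ell2_on A \<Longrightarrow> ell2_norm (S u) \<le> C * ell2_norm u"
    and S: "\<And>u. u \<in> ell2_on A \<Longrightarrow> S (B u) = u \<and> B (S u) = u"
    using assms unfolding invertible_on_def bounded_on_def by blast
  define S' where "S' v = S (\<lambda>x. - v x)" for v
  have "bounded_on A S'"
    unfolding bounded_on_def
  proof (intro conjI ballI exI)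
    fix u assume u: "u \<in> ell2_on A"
    show "S' u \<in> ell2_on A" using SV[OF ell2_on_uminus[OF u]] by (simp add: S'_def)
    show "ell2_norm (S' u) \<le> C * ell2_norm u"
      using Sb[OF ell2_on_uminus[OF u]] ell2_uminus(2)[of u] by (simp add: S'_def)
  qed
  moreover have "S' (\<lambda>x. - B u x) = u \<and> (\<lambda>x. - B (S' u) x) = u" if "u \<in> ell2_on A" for u
    using S that ell2_on_uminus[OF that] by (simp add: S'_def)
  ultimately show ?thesis unfolding invertible_on_def by blast
qed

lemma invertible_on_uminus: "invertible_on A (\<lambda>u x. - B u x) \<longleftrightarrow> invertible_on A B"
  using invertible_on_uminus_imp[of A B] invertible_on_uminus_imp[of A "\<lambda>u x. - B u x"] by auto

lemma uminus_lincomb: "- lincomb F c x = lincomb F (\<lambda>f. - c f) x"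
  unfolding lincomb_def by (simp add: sum_negf)

lemma fredholm_on_uminus_imp:
  assumes "fredholm_on A B"
  shows "fredholm_on A (\<lambda>u x. - B u x)"
proof -
  obtain F where F: "finite F" "F \<subseteq> ell2_on A"
      "\<forall>u\<in>ell2_on A. B u = (\<lambda>_. 0) \<longrightarrow> (\<exists>c. u = lincomb F c)"
    using assms unfolding fredholm_on_def by blast
  obtain G where G: "finite G" "G \<subseteq> ell2_on A"
      "\<forall>v\<in>ell2_on A. \<exists>u\<in>ell2_on A. \<exists>c. v = (\<lambda>x. B u x + lincomb G c x)"
    using assms unfolding fredholm_on_def by blast
  have "\<forall>u\<in>ell2_on A. (\<lambda>x. - B u x) = (\<lambda>_. 0) \<longrightarrow> (\<exists>c. u = lincomb F c)"
  proof (intro ballI impI)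
    fix u assume u: "u \<in> ell2_on A" and "(\<lambda>x. - B u x) = (\<lambda>_. 0)"
    then have "B u = (\<lambda>_. 0)" using fun_cong by fastforce
    then show "\<exists>c. u = lincomb F c" using F(3) u by blast
  qed
  moreover have "\<forall>v\<in>ell2_on A. \<exists>u\<in>ell2_on A. \<exists>c. v = (\<lambda>x. - B u x + lincomb G c x)"
  proof
    fix v assume v: "v \<in> ell2_on A"
    obtain u c where u: "u \<in> ell2_on A" "(\<lambda>x. - v x) = (\<lambda>x. B u x + lincomb G c x)"
      using G(3) ell2_on_uminus[OF v] by blast
    have "v = (\<lambda>x. - B u x + - lincomb G c x)"
    proof
      show "v x = - B u x + - lincomb G c x" for x
        using fun_cong[OF u(2), of x] by (metis minus_add_distrib minus_minus)
    qed
    also have "\<dots> = (\<lambda>x. - B u x + lincomb G (\<lambda>f. - c f) x)" by (simp only: uminus_lincomb)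
    finally show "\<exists>u\<in>ell2_on A. \<exists>c. v = (\<lambda>x. - B u x + lincomb G c x)" using u(1) by blast
  qed
  ultimately show ?thesis unfolding fredholm_on_def using F(1,2) G(1,2) by blast
qed

lemma fredholm_on_uminus: "fredholm_on A (\<lambda>u x. - B u x) \<longleftrightarrow> fredholm_on A B"
  using fredholm_on_uminus_imp[of A B] fredholm_on_uminus_imp[of A "\<lambda>u x. - B u x"]
    by (auto simp del: add_uminus_conv_diff)

lemma mat_op_uminus: "mat_op (\<lambda>x y. - H x y) A u = (\<lambda>x. - mat_op H A u x)"
  unfolding mat_op_def by (auto simp: infsum_uminus)

lemma shift_op_mat_op_uminus:
  "shift_op (mat_op (\<lambda>x y. - H x y) A) z = (\<lambda>u x. - shift_op (mat_op H A) (- z) u x)"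
  unfolding shift_op_def mat_op_uminus by auto

lemma uminus_image_iff: "(t::real) \<in> uminus ` S \<longleftrightarrow> - t \<in> S"
  by force

lemma real_spectrum_uminus:
  "real_points (spectrum_on A (mat_op (\<lambda>x y. - H x y) A)) =
    uminus ` real_points (spectrum_on A (mat_op H A))"
proof (rule set_eqI)
  fix t
  have "t \<in> real_points (spectrum_on A (mat_op (\<lambda>x y. - H x y) A)) \<longleftrightarrow>
      \<not> invertible_on A (shift_op (mat_op (\<lambda>x y. - H x y) A) (complex_of_real t))"
    by (simp add: real_points_def spectrum_on_def)
  also have "\<dots> \<longleftrightarrow> \<not> invertible_on A (\<lambda>u x. - shift_op (mat_op H A) (- complex_of_real t) u x)"
    by (simp only: shift_op_mat_op_uminus)
  also have "\<dots> \<longleftrightarrow> \<not> invertible_on A (shift_op (mat_op H A) (complex_of_real (- t)))"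
    by (simp only: invertible_on_uminus of_real_minus)
  also have "\<dots> \<longleftrightarrow> - t \<in> real_points (spectrum_on A (mat_op H A))"
    by (simp add: real_points_def spectrum_on_def)
  finally show "t \<in> real_points (spectrum_on A (mat_op (\<lambda>x y. - H x y) A)) \<longleftrightarrow>
      t \<in> uminus ` real_points (spectrum_on A (mat_op H A))" by (simp only: uminus_image_iff)
qed

lemma real_ess_spectrum_uminus:
  "real_points (ess_spectrum_on A (mat_op (\<lambda>x y. - H x y) A)) =
    uminus ` real_points (ess_spectrum_on A (mat_op H A))"
proof (rule set_eqI)
  fix t
  have "t \<in> real_points (ess_spectrum_on A (mat_op (\<lambda>x y. - H x y) A)) \<longleftrightarrow>
      \<not> fredholm_on A (shift_op (mat_op (\<lambda>x y. - H x y) A) (complex_of_real t))"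
    by (simp add: real_points_def ess_spectrum_on_def)
  also have "\<dots> \<longleftrightarrow> \<not> fredholm_on A (\<lambda>u x. - shift_op (mat_op H A) (- complex_of_real t) u x)"
    by (simp only: shift_op_mat_op_uminus)
  also have "\<dots> \<longleftrightarrow> \<not> fredholm_on A (shift_op (mat_op H A) (complex_of_real (- t)))"
    by (simp only: fredholm_on_uminus of_real_minus)
  also have "\<dots> \<longleftrightarrow> - t \<in> real_points (ess_spectrum_on A (mat_op H A))"
    by (simp add: real_points_def ess_spectrum_on_def)
  finally show "t \<in> real_points (ess_spectrum_on A (mat_op (\<lambda>x y. - H x y) A)) \<longleftrightarrow>
      t \<in> uminus ` real_points (ess_spectrum_on A (mat_op H A))" by (simp only: uminus_image_iff)
qed

lemma selfadjoint_matrix_uminus: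
  assumes "selfadjoint_matrix H"
  shows "selfadjoint_matrix (\<lambda>x y. - H x y)"
proof -
  interpret selfadjoint_matrix H by (rule assms)
  show ?thesis
  proof
    show "bounded_matrix_on UNIV (\<lambda>x y. - H x y)"
      unfolding bounded_matrix_on_def
    proof (intro conjI ballI)
      fix u :: "'a \<Rightarrow> complex" and x assume u: "u \<in> ell2_on UNIV"
      show "(\<lambda>y. - H x y * u y) summable_on UNIV"
        using row_summable[OF u, of x] summable_on_uminus[of "\<lambda>y. H x y * u y" UNIV] by simp
    next
      show "bounded_on UNIV (mat_op (\<lambda>x y. - H x y) UNIV)"
        unfolding bounded_on_def mat_op_uminus
      proof (intro conjI ballI exI)
        fix u :: "'a \<Rightarrow> complex" assume u: "u \<in> ell2_on UNIV"
        show "(\<lambda>x. - T u x) \<in> ell2_on UNIV"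
          by (rule ell2_on_uminus[OF linear_on_ell2_on[OF linear_T u]])
        show "ell2_norm (\<lambda>x. - T u x) \<le> K * ell2_norm u"
          using norm_bounded_onD[OF norm_bounded_T u] ell2_uminus(2)[of "T u"] by simp
      qed
    qed
    show "self_adjoint_on UNIV (mat_op (\<lambda>x y. - H x y) UNIV)"
      unfolding self_adjoint_on_def mat_op_uminus
    proof (intro ballI)
      fix u v :: "'a \<Rightarrow> complex" assume u: "u \<in> ell2_on UNIV" and v: "v \<in> ell2_on UNIV"
      have l: "square_summable u" "square_summable v" "square_summable (T u)" "square_summable (T v)"
        using u v ell2_on_square_summable linear_on_ell2_on[OF linear_T] by blast+
      have "ell2_inner (\<lambda>x. - T u x) v = - ell2_inner (T u) v"
        by (rule ell2_inner_uminus_left[OF l(3,2)])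
      also have "\<dots> = - ell2_inner u (T v)" using T_hermitian[OF u v] by simp
      also have "\<dots> = ell2_inner u (\<lambda>x. - T v x)"
        using ell2_inner_scale_right[OF l(4) l(1), of "-1"] by simp
      finally show "ell2_inner (\<lambda>x. - T u x) v = ell2_inner u (\<lambda>x. - T v x)" .
    qed
  qed
qed

theorem ess_spectrum_bottom_top:
  fixes H :: "'a \<Rightarrow> 'a \<Rightarrow> complex"
  assumes infinite_index: "infinite (UNIV :: 'a set)"
    and bounded_H: "bounded_matrix_on UNIV H"
    and self_adjoint_H: "self_adjoint_on UNIV (mat_op H UNIV)"
  shows "(Inf (real_points (ess_spectrum_on UNIV (mat_op H UNIV))) =
           Sup ((\<lambda>M0. Inf (real_points (spectrum_on M0 (mat_op H M0)))) ` {M0. finite (- M0)})) \<and>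
         (Sup (real_points (ess_spectrum_on UNIV (mat_op H UNIV))) =
           Inf ((\<lambda>M0. Sup (real_points (spectrum_on M0 (mat_op H M0)))) ` {M0. finite (- M0)}))"
proof
  interpret selfadjoint_matrix_infinite H
    using assms by (simp add: selfadjoint_matrix_infinite_def selfadjoint_matrix_infinite_axioms_def
        selfadjoint_matrix_def)
  show "Inf (real_points (ess_spectrum_on UNIV (mat_op H UNIV))) =
      Sup ((\<lambda>M0. Inf (real_points (spectrum_on M0 (mat_op H M0)))) ` {M0. finite (- M0)})"
    by (rule Inf_ess_spectrum)
  interpret neg: selfadjoint_matrix_infinite "\<lambda>x y. - H x y"
    using selfadjoint_matrix_uminus[OF selfadjoint_matrix_axioms] infinite_index
    by (simp add: selfadjoint_matrix_infinite_def selfadjoint_matrix_infinite_axioms_def)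
  have "Sup (real_points (ess_spectrum_on UNIV (mat_op H UNIV)))
      = - Inf (uminus ` real_points (ess_spectrum_on UNIV (mat_op H UNIV)))"
    by (rule Sup_eq_uminus_Inf)
  also have "\<dots> = - Sup ((\<lambda>M0. Inf (uminus ` real_points (spectrum_on M0 (mat_op H M0)))) ` {M0. finite (- M0)})"
    using neg.Inf_ess_spectrum unfolding real_ess_spectrum_uminus real_spectrum_uminus by simp
  also have "\<dots> = - Sup ((\<lambda>M0. - Sup (real_points (spectrum_on M0 (mat_op H M0)))) ` {M0. finite (- M0)})"
    by (simp add: Sup_eq_uminus_Inf)
  also have "\<dots> = Inf ((\<lambda>M0. Sup (real_points (spectrum_on M0 (mat_op H M0)))) ` {M0. finite (- M0)})"
    by (simp add: Inf_real_def image_image)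
  finally show "Sup (real_points (ess_spectrum_on UNIV (mat_op H UNIV))) =
      Inf ((\<lambda>M0. Sup (real_points (spectrum_on M0 (mat_op H M0)))) ` {M0. finite (- M0)})" .
qed

theorem theorem1p2:
  fixes \<delta> :: "'a::countable \<Rightarrow> 'a \<Rightarrow> real"
    and H :: "'a \<Rightarrow> 'a \<Rightarrow> complex"
  assumes "infinite (UNIV :: 'a set)"
    and "Metric_space UNIV \<delta>"
    and "uniformly_discrete \<delta>"
    and "bounded_geometry \<delta>"
    and "property_A \<delta>"
    and "bounded_matrix_on UNIV H"
    and "self_adjoint_on UNIV (mat_op H UNIV)"
    and "band_dominated \<delta> H"
  shows "(Inf (real_points (ess_spectrum_on UNIV (mat_op H UNIV))) =
           Sup ((\<lambda>M0. Inf (real_points (spectrum_on M0 (mat_op H M0)))) ` {M0. finite (- M0)})) \<and>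
         (Sup (real_points (ess_spectrum_on UNIV (mat_op H UNIV))) =
           Inf ((\<lambda>M0. Sup (real_points (spectrum_on M0 (mat_op H M0)))) ` {M0. finite (- M0)}))"
  using ess_spectrum_bottom_top[OF assms(1,6,7)] .

end
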